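(* Let $\alpha\in(0,1)$, let $\bar w\in\mathcal{F}$ with $R_\alpha(\bar w)<\infty$, $g\in L^2(\Omega)$ and $\Delta\ge0$. Then the problem \[ \min_{w\in L^1(\Omega)}\ (g,w-\bar w)_{L^2}+\eta R_\alpha(w)-\eta R_\alpha(\bar w)\quad\text{s.t. }\|w-\bar w\|_{L^1}\le\Delta,\ w(x)\in W\text{ for a.e. }x\in\Omega \] admits a minimizer.
   Context: Let $d\in\mathbb{N}$, $\Omega\subset\mathbb{R}^d$ a bounded polyhedral domain, $\eta>0$, $W=\{w_1,\dots,w_M\}\subset\mathbb{Z}$ a set of $M$ distinct integers, $\mathcal{F}\coloneqq\{w\in L^1(\Omega):w(x)\in W\text{ a.e.}\}$. For measurable $E\subset\mathbb{R}^d$, $P_\alpha(E)\coloneqq\int_{\mathbb{R}^d}\int_{\mathbb{R}^d}\frac{|\chi_E(x)-\chi_E(y)|}{|x-y|^{d+\alpha}}\,\mathrm{d}x\,\mathrm{d}y\in[0,\infty]$. For $w\in\mathcal{F}$, $E_i\coloneqq w^{-1}(\{w_i\})$ and $R_\alpha(w)\coloneqq(1-\alpha)\sum_{i=1}^M|w_i|P_\alpha(E_i)$. *)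

theory Defs
  imports "HOL-Analysis.Analysis"
begin

definition polyhedral_domain :: "'a::euclidean_space set \<Rightarrow> bool" where
  "polyhedral_domain \<Omega> \<longleftrightarrow> \<Omega> \<noteq> {} \<and> open \<Omega> \<and> connected \<Omega> \<and> bounded \<Omega> \<and>
     (\<exists>\<P>. finite \<P> \<and> (\<forall>P\<in>\<P>. polytope P) \<and> closure \<Omega> = \<Union>\<P>)"

definition frac_perimeter :: "real \<Rightarrow> 'a::euclidean_space set \<Rightarrow> ennreal" where
  "frac_perimeter \<alpha> E =
     (\<integral>\<^sup>+ x. (\<integral>\<^sup>+ y. ennreal (\<bar>indicator E x - indicator E y\<bar> /
          norm (x - y) powr (real DIM('a) + \<alpha>)) \<partial>lebesgue) \<partial>lebesgue)"

definition level_set :: "'a set \<Rightarrow> ('a \<Rightarrow> real) \<Rightarrow> int \<Rightarrow> 'a set" where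
  "level_set \<Omega> w v = {x\<in>\<Omega>. w x = real_of_int v}"

definition R_alpha :: "real \<Rightarrow> int set \<Rightarrow> 'a::euclidean_space set \<Rightarrow> ('a \<Rightarrow> real) \<Rightarrow> ennreal" where
  "R_alpha \<alpha> W \<Omega> w =
     ennreal (1 - \<alpha>) * (\<Sum>v\<in>W. ennreal (real_of_int \<bar>v\<bar>) * frac_perimeter \<alpha> (level_set \<Omega> w v))"

definition in_F :: "int set \<Rightarrow> 'a::euclidean_space set \<Rightarrow> ('a \<Rightarrow> real) \<Rightarrow> bool" where
  "in_F W \<Omega> w \<longleftrightarrow> integrable (lebesgue_on \<Omega>) w \<and>
     (AE x in lebesgue_on \<Omega>. w x \<in> real_of_int ` W)"

definition trust_obj ::
  "real \<Rightarrow> real \<Rightarrow> int set \<Rightarrow> 'a::euclidean_space set \<Rightarrow> ('a \<Rightarrow> real) \<Rightarrow> ('a \<Rightarrow> real)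
     \<Rightarrow> ('a \<Rightarrow> real) \<Rightarrow> ereal" where
  "trust_obj \<eta> \<alpha> W \<Omega> g wbar w =
     ereal (integral\<^sup>L (lebesgue_on \<Omega>) (\<lambda>x. g x * (w x - wbar x)))
     + ereal \<eta> * enn2ereal (R_alpha \<alpha> W \<Omega> w) - ereal \<eta> * enn2ereal (R_alpha \<alpha> W \<Omega> wbar)"

definition trust_feasible ::
  "int set \<Rightarrow> 'a::euclidean_space set \<Rightarrow> real \<Rightarrow> ('a \<Rightarrow> real) \<Rightarrow> ('a \<Rightarrow> real) \<Rightarrow> bool" where
  "trust_feasible W \<Omega> \<Delta> wbar w \<longleftrightarrow> integrable (lebesgue_on \<Omega>) w \<and>
     integral\<^sup>L (lebesgue_on \<Omega>) (\<lambda>x. \<bar>w x - wbar x\<bar>) \<le> \<Delta> \<and>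
     (AE x in lebesgue_on \<Omega>. w x \<in> real_of_int ` W)"

end

(* By the direct method. Feasible functions take values in the finite set W, so the linear term
   is bounded by 2 (sum_i |w_i|) |g|_1, and along a minimizing sequence R_alpha stays bounded.
   The step function sum_i w_i 1_{E_i} (extended by 0 outside Omega) has Gagliardo seminorm
   with kernel |x - y|^-(d + alpha) at most R_alpha(w) / (1 - alpha). Such a bound gives
   compactness: on a grid of mesh h, a function is within O(h^alpha) times its seminorm of its
   cell averages in L^1, a diagonal subsequence makes all cell averages converge, so this
   subsequence is Cauchy in L^1 and a further subsequence converges a.e. Integer-valued
   convergent sequences are eventually constant, so the limit is W-valued; the trust-region
   constraint and the linear term pass to the limit by dominated convergence, and R_alpha is
   lower semicontinuous by Fatou's lemma. *)
theory Submission
  imports Defs "HOL-Library.Diagonal_Subsequence"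
begin

section \<open>The direct method\<close>

lemma ereal_bounded_minimizing_sequence:
  fixes F :: "'b \<Rightarrow> ereal"
  assumes "P x0" and fin: "Inf (F ` Collect P) \<noteq> \<infinity>"
  obtains w :: "nat \<Rightarrow> 'b" and c where "\<And>n. P (w n)" "\<And>n. F (w n) \<le> ereal c"
    "(\<lambda>n. F (w n)) \<longlonglongrightarrow> Inf (F ` Collect P)"
proof -
  define I where "I = Inf (F ` Collect P)"
  have "F ` Collect P \<noteq> {}"
    using \<open>P x0\<close> by blast
  from Inf_as_limit[OF this] obtain u where u: "\<And>n. u n \<in> F ` Collect P" "u \<longlonglongrightarrow> I"
    unfolding I_def by blast
  then have "\<forall>n. \<exists>v. P v \<and> F v = u n"
    by (metis (mono_tags) image_iff mem_Collect_eq)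
  then obtain w where w: "\<And>n. P (w n)" "\<And>n. F (w n) = u n"
    by metis
  have "\<exists>c. I < ereal c"
  proof (cases I)
    case (real r)
    then show ?thesis by (intro exI[of _ "r + 1"]) simp
  qed (use fin in \<open>auto simp: I_def\<close>)
  then obtain c where "I < ereal c" ..
  from order_tendstoD(2)[OF u(2) this] obtain N where N: "\<And>n. N \<le> n \<Longrightarrow> u n < ereal c"
    unfolding eventually_sequentially by blast
  show ?thesis
  proof (rule that[of "\<lambda>n. w (n + N)" c])
    show "P (w (n + N))" for n
      by (rule w(1))
    show "F (w (n + N)) \<le> ereal c" for n
      using N[of "n + N"] w(2)[of "n + N"] by simp
    show "(\<lambda>n. F (w (n + N))) \<longlonglongrightarrow> Inf (F ` Collect P)"
      using LIMSEQ_ignore_initial_segment[OF u(2), of N] unfolding w(2) I_def .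
  qed
qed

lemma ereal_direct_method:
  fixes F :: "'b \<Rightarrow> ereal"
  assumes "P x0"
    and compact_lsc: "\<And>w c. (\<And>n::nat. P (w n)) \<Longrightarrow> (\<And>n. F (w n) \<le> ereal c) \<Longrightarrow>
      \<exists>r::nat \<Rightarrow> nat. \<exists>w'. strict_mono r \<and> P w' \<and> F w' \<le> liminf (\<lambda>n. F (w (r n)))"
  shows "\<exists>w. P w \<and> (\<forall>v. P v \<longrightarrow> F w \<le> F v)"
proof -
  define I where "I = Inf (F ` Collect P)"
  have I_le: "I \<le> F v" if "P v" for v
    unfolding I_def using that by (auto intro: Inf_lower)
  show ?thesis
  proof (cases "I = \<infinity>")
    case True
    then have "F x0 \<le> F v" if "P v" for v
      using I_le[OF that] by simp
    then show ?thesis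
      using \<open>P x0\<close> by blast
  next
    case False
    then obtain w :: "nat \<Rightarrow> 'b" and c where w: "\<And>n. P (w n)" "\<And>n. F (w n) \<le> ereal c"
      "(\<lambda>n. F (w n)) \<longlonglongrightarrow> I"
      using ereal_bounded_minimizing_sequence[where P=P and F=F, OF \<open>P x0\<close>] unfolding I_def by blast
    then obtain r w' where r: "strict_mono r" "P w'" "F w' \<le> liminf (\<lambda>n. F (w (r n)))"
      using compact_lsc by blast
    have "liminf (\<lambda>n. F (w (r n))) = I"
      using LIMSEQ_subseq_LIMSEQ[OF w(3) r(1)] unfolding o_def
      by (rule lim_imp_Liminf[OF trivial_limit_sequentially])
    then have "F w' \<le> F v" if "P v" for v
      using r(3) I_le[OF that] by simp
    then show ?thesis
      using r(2) by blast
  qed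
qed

lemma bounded_family_convergent_subseq:
  fixes u :: "'i \<Rightarrow> nat \<Rightarrow> 'b::heine_borel"
  assumes "countable Z" and bnd: "\<And>z. z \<in> Z \<Longrightarrow> bounded (range (u z))"
  shows "\<exists>r. strict_mono r \<and> (\<forall>z\<in>Z. convergent (\<lambda>n. u z (r n)))"
proof (cases "Z = {}")
  case True
  then show ?thesis by (auto intro: strict_mono_id)
next
  case False
  define P where "P k s \<longleftrightarrow> convergent (\<lambda>n. u (from_nat_into Z k) (s n))"
    for k and s :: "nat \<Rightarrow> nat"
  interpret subseqs P
  proof
    fix k and s :: "nat \<Rightarrow> nat"
    have "bounded (range (\<lambda>n. u (from_nat_into Z k) (s n)))"
      using bnd[OF from_nat_into[OF False]] by (rule bounded_subset) auto
    then obtain l r where "strict_mono r" "((\<lambda>n. u (from_nat_into Z k) (s n)) \<circ> r) \<longlonglongrightarrow> l"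
      using bounded_imp_convergent_subsequence by blast
    then show "\<exists>r. strict_mono r \<and> P k (s \<circ> r)"
      unfolding P_def convergent_def by (auto simp: o_def)
  qed
  have diag_P: "P k (diagseq \<circ> (+) (Suc k))" for k
    by (rule diagseq_holds) (auto simp: P_def o_def intro: convergent_subseq_convergent[unfolded o_def])
  have "convergent (\<lambda>n. u (from_nat_into Z k) (diagseq n))" for k
    using diag_P[of k] convergent_ignore_initial_segment[of "\<lambda>n. u (from_nat_into Z k) (diagseq n)" "Suc k"]
    unfolding P_def o_def by (simp add: add.commute)
  then show ?thesis
    using subseq_diagseq \<open>countable Z\<close> by (metis from_nat_into_to_nat_on)
qed

lemma Ints_tendsto_imp_eventually_eq:
  fixes s :: "nat \<Rightarrow> real"
  assumes ints: "\<And>k. s k \<in> \<int>" and lim: "s \<longlonglongrightarrow> l"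
  shows "\<forall>\<^sub>F k in sequentially. s k = l"
proof -
  have "l \<in> \<int>"
    using Lim_in_closed_set[OF closed_Ints _ _ lim] ints by simp
  moreover have "\<forall>\<^sub>F k in sequentially. \<bar>s k - l\<bar> < 1"
    using lim by (auto simp: tendsto_iff dist_real_def)
  ultimately show ?thesis
    using ints by (elim eventually_mono) (metis Ints_diff Ints_nonzero_abs_less1 eq_iff_diff_eq_0)
qed

lemma tendsto_of_int_image_eventually_eq:
  fixes s :: "nat \<Rightarrow> real"
  assumes vals: "\<And>k. s k \<in> real_of_int ` W" and lim: "s \<longlonglongrightarrow> l"
  shows "l \<in> real_of_int ` W \<and> (\<forall>\<^sub>F k in sequentially. s k = l)"
proof -
  have "\<forall>\<^sub>F k in sequentially. s k = l"
    using vals by (intro Ints_tendsto_imp_eventually_eq[OF _ lim]) (metis Ints_of_int imageE)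
  moreover from this obtain k where "s k = l"
    unfolding eventually_sequentially by blast
  ultimately show ?thesis
    using vals by metis
qed

lemma integral_tendsto_of_eventually_eq:
  fixes f :: "nat \<Rightarrow> 'a \<Rightarrow> real"
  assumes "\<And>k. f k \<in> borel_measurable M" "f' \<in> borel_measurable M" "integrable M h"
    and "\<And>k. AE x in M. \<bar>f k x\<bar> \<le> h x"
    and "AE x in M. \<forall>\<^sub>F k in sequentially. f k x = f' x"
  shows "(\<lambda>k. integral\<^sup>L M (f k)) \<longlonglongrightarrow> integral\<^sup>L M f'"
  using assms
  by (intro integral_dominated_convergence[where w=h]) (auto elim!: AE_mp intro: tendsto_eventually)

lemma nn_integral_nn_integral_le_liminf:
  fixes G :: "nat \<Rightarrow> 'a \<Rightarrow> 'a \<Rightarrow> ennreal"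
  assumes M: "sigma_finite_measure M"
    and meas: "\<And>n. (\<lambda>(x, y). G n x y) \<in> borel_measurable (M \<Otimes>\<^sub>M M)"
    and P: "AE x in M. P x"
    and ev: "\<And>x y. P x \<Longrightarrow> P y \<Longrightarrow> \<forall>\<^sub>F n in sequentially. G n x y = G' x y"
  shows "(\<integral>\<^sup>+x. (\<integral>\<^sup>+y. G' x y \<partial>M) \<partial>M) \<le> liminf (\<lambda>n. \<integral>\<^sup>+x. (\<integral>\<^sup>+y. G n x y \<partial>M) \<partial>M)"
proof -
  have liminf_eq: "liminf (\<lambda>n. G n x y) = G' x y" if "P x" "P y" for x y
    by (rule lim_imp_Liminf[OF trivial_limit_sequentially tendsto_eventually[OF ev[OF that]]])
  have meas_section: "(\<lambda>y. G n x y) \<in> borel_measurable M" if "x \<in> space M" for n x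
    using measurable_Pair2[OF meas[of n] that] by simp
  have inner: "(\<integral>\<^sup>+y. G' x y \<partial>M) \<le> liminf (\<lambda>n. \<integral>\<^sup>+y. G n x y \<partial>M)"
    if "P x" "x \<in> space M" for x
  proof -
    have "(\<integral>\<^sup>+y. G' x y \<partial>M) = (\<integral>\<^sup>+y. liminf (\<lambda>n. G n x y) \<partial>M)"
      by (rule nn_integral_cong_AE) (use P liminf_eq[OF that(1)] in \<open>auto elim!: AE_mp\<close>)
    also have "\<dots> \<le> liminf (\<lambda>n. \<integral>\<^sup>+y. G n x y \<partial>M)"
      by (rule nn_integral_liminf) (rule meas_section[OF that(2)])
    finally show ?thesis .
  qed
  have "(\<integral>\<^sup>+x. (\<integral>\<^sup>+y. G' x y \<partial>M) \<partial>M) \<le> (\<integral>\<^sup>+x. liminf (\<lambda>n. \<integral>\<^sup>+y. G n x y \<partial>M) \<partial>M)"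
    by (rule nn_integral_mono_AE) (use P inner in \<open>auto elim!: AE_mp intro: AE_I2\<close>)
  also have "\<dots> \<le> liminf (\<lambda>n. \<integral>\<^sup>+x. (\<integral>\<^sup>+y. G n x y \<partial>M) \<partial>M)"
    by (rule nn_integral_liminf) (rule sigma_finite_measure.borel_measurable_nn_integral[OF M meas])
  finally show ?thesis .
qed

section \<open>Gagliardo seminorms and cell averages\<close>

lemma sigma_finite_lebesgue: "sigma_finite_measure (lebesgue :: 'a::euclidean_space measure)"
proof -
  obtain A :: "'a set set" where A: "countable A" "A \<subseteq> sets lborel" "\<Union>A = space lborel"
      "\<forall>a\<in>A. emeasure lborel a \<noteq> \<infinity>"
    using sigma_finite_measure.sigma_finite_countable[OF sigma_finite_lborel] by blast
  then show ?thesis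
    unfolding sigma_finite_measure_def by (intro exI[of _ A]) auto
qed

definition gagliardo_kernel :: "real \<Rightarrow> ('a::real_normed_vector \<Rightarrow> real) \<Rightarrow> 'a \<Rightarrow> 'a \<Rightarrow> ennreal" where
  "gagliardo_kernel s f x y = ennreal (\<bar>f x - f y\<bar> / norm (x - y) powr s)"

definition gagliardo :: "real \<Rightarrow> ('a::euclidean_space \<Rightarrow> real) \<Rightarrow> ennreal" where
  "gagliardo s f = (\<integral>\<^sup>+x. (\<integral>\<^sup>+y. gagliardo_kernel s f x y \<partial>lebesgue) \<partial>lebesgue)"

definition gagliardo_on :: "'a::euclidean_space set \<Rightarrow> real \<Rightarrow> ('a \<Rightarrow> real) \<Rightarrow> ennreal" where
  "gagliardo_on Q s f =
     (\<integral>\<^sup>+x. indicator Q x * (\<integral>\<^sup>+y. indicator Q y * gagliardo_kernel s f x y \<partial>lebesgue) \<partial>lebesgue)"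

lemma frac_perimeter_eq_gagliardo:
  "frac_perimeter \<alpha> E = gagliardo (real DIM('a) + \<alpha>) (indicator E :: 'a::euclidean_space \<Rightarrow> real)"
  unfolding frac_perimeter_def gagliardo_def gagliardo_kernel_def ..

lemma borel_measurable_gagliardo_kernel:
  fixes f :: "'a::euclidean_space \<Rightarrow> real"
  assumes "f \<in> borel_measurable lebesgue"
  shows "(\<lambda>(x, y). gagliardo_kernel s f x y) \<in> borel_measurable (lebesgue \<Otimes>\<^sub>M lebesgue)"
proof -
  have id: "(\<lambda>x. x) \<in> (lebesgue :: 'a measure) \<rightarrow>\<^sub>M borel"
    by (simp add: measurable_completion)
  have "(\<lambda>z. fst z - snd z) \<in> borel_measurable (lebesgue \<Otimes>\<^sub>M (lebesgue :: 'a measure))"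
    using measurable_compose[OF measurable_fst id] measurable_compose[OF measurable_snd id]
    by (intro borel_measurable_diff) auto
  moreover have "(\<lambda>z. f (fst z)) \<in> borel_measurable (lebesgue \<Otimes>\<^sub>M lebesgue)"
    using measurable_compose[OF measurable_fst assms] .
  moreover have "(\<lambda>z. f (snd z)) \<in> borel_measurable (lebesgue \<Otimes>\<^sub>M lebesgue)"
    using measurable_compose[OF measurable_snd assms] .
  ultimately show ?thesis
    unfolding gagliardo_kernel_def case_prod_beta' by measurable
qed

lemma borel_measurable_gagliardo_kernel_section:
  fixes f :: "'a::euclidean_space \<Rightarrow> real"
  assumes "f \<in> borel_measurable lebesgue"
  shows "(\<lambda>y. gagliardo_kernel s f x y) \<in> borel_measurable lebesgue"
  using measurable_Pair2[OF borel_measurable_gagliardo_kernel[OF assms], of x] by simp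

lemma borel_measurable_gagliardo_on_integrand:
  fixes f :: "'a::euclidean_space \<Rightarrow> real"
  assumes "f \<in> borel_measurable lebesgue" "Q \<in> sets lebesgue"
  shows "(\<lambda>x. indicator Q x * (\<integral>\<^sup>+y. indicator Q y * gagliardo_kernel s f x y \<partial>lebesgue))
    \<in> borel_measurable lebesgue"
proof -
  have "(\<lambda>z. indicator Q (snd z) :: ennreal) \<in> borel_measurable (lebesgue \<Otimes>\<^sub>M lebesgue)"
    using assms(2) by measurable
  from borel_measurable_times_ennreal[OF this borel_measurable_gagliardo_kernel[OF assms(1),
        of s, unfolded case_prod_beta']]
  have "(\<lambda>(x, y). indicator Q y * gagliardo_kernel s f x y) \<in> borel_measurable (lebesgue \<Otimes>\<^sub>M lebesgue)"
    by (simp add: case_prod_beta')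
  from sigma_finite_measure.borel_measurable_nn_integral[OF sigma_finite_lebesgue this]
  show ?thesis using assms(2) by measurable
qed

definition mean_on :: "'a::euclidean_space set \<Rightarrow> ('a \<Rightarrow> real) \<Rightarrow> real" where
  "mean_on Q f = (\<integral>y. indicator Q y * f y \<partial>lebesgue) / measure lebesgue Q"

lemma integrable_indicator_mult_bounded:
  fixes g :: "'a \<Rightarrow> real"
  assumes "Q \<in> sets M" "emeasure M Q < \<infinity>" "g \<in> borel_measurable M" "\<And>x. \<bar>g x\<bar> \<le> B"
  shows "integrable M (\<lambda>x. indicator Q x * g x)"
  using integrableI_bounded_set_indicator[of Q M g B] assms by simp

lemma abs_mean_on_le:
  fixes f :: "'a::euclidean_space \<Rightarrow> real"
  assumes Q: "Q \<in> sets lebesgue" "emeasure lebesgue Q < \<infinity>"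
    and fm: "f \<in> borel_measurable lebesgue" and bnd: "\<And>x. \<bar>f x\<bar> \<le> B"
  shows "\<bar>mean_on Q f\<bar> \<le> B"
proof -
  have B0: "0 \<le> B" using bnd[of 0] by linarith
  have "\<bar>\<integral>y. indicator Q y * f y \<partial>lebesgue\<bar> \<le> (\<integral>y. B * indicator Q y \<partial>lebesgue)"
  proof (rule integral_abs_bound_integral)
    show "integrable lebesgue (\<lambda>y. indicator Q y * f y)"
      by (rule integrable_indicator_mult_bounded[OF Q fm bnd])
    show "integrable lebesgue (\<lambda>y. B * indicator Q y)"
      using Q by (intro integrable_mult_right integrable_real_indicator) auto
    show "\<bar>indicator Q y * f y\<bar> \<le> B * indicator Q y" for y
      using bnd[of y] by (auto simp: indicator_def)
  qed
  also have "\<dots> = B * measure lebesgue Q"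
    by simp
  finally show ?thesis
    unfolding mean_on_def using B0
    by (cases "measure lebesgue Q = 0") (auto simp: abs_divide divide_le_eq)
qed

lemma abs_diff_mean_on_le:
  fixes f :: "'a::euclidean_space \<Rightarrow> real"
  assumes Q: "Q \<in> sets lebesgue" "emeasure lebesgue Q < \<infinity>" "0 < measure lebesgue Q"
    and fm: "f \<in> borel_measurable lebesgue" and bnd: "\<And>x. \<bar>f x\<bar> \<le> B"
  shows "\<bar>f x - mean_on Q f\<bar> \<le> (\<integral>y. indicator Q y * \<bar>f x - f y\<bar> \<partial>lebesgue) / measure lebesgue Q"
proof -
  have "(\<integral>y. indicator Q y * (f x - f y) \<partial>lebesgue)
      = (\<integral>y. f x * indicator Q y \<partial>lebesgue) - (\<integral>y. indicator Q y * f y \<partial>lebesgue)"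
    unfolding right_diff_distrib using integrable_indicator_mult_bounded[OF Q(1,2) fm bnd] Q
    by (subst Bochner_Integration.integral_diff[symmetric]) (auto simp: mult.commute)
  also have "\<dots> = f x * measure lebesgue Q - (\<integral>y. indicator Q y * f y \<partial>lebesgue)"
    by simp
  finally have "f x - mean_on Q f = (\<integral>y. indicator Q y * (f x - f y) \<partial>lebesgue) / measure lebesgue Q"
    using Q(3) unfolding mean_on_def by (simp add: field_simps)
  then show ?thesis
    using Q(3) integral_abs_bound[of lebesgue "\<lambda>y. indicator Q y * (f x - f y)"]
    by (simp add: abs_divide divide_right_mono abs_mult)
qed

lemma integral_indicator_abs_diff_le_gagliardo_kernel:
  fixes f :: "'a::euclidean_space \<Rightarrow> real"
  assumes Q: "Q \<in> sets lebesgue" "emeasure lebesgue Q < \<infinity>"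
    and diam: "\<And>y. y \<in> Q \<Longrightarrow> norm (x - y) \<le> \<delta>" and s: "0 \<le> s"
    and fm: "f \<in> borel_measurable lebesgue" and bnd: "\<And>x. \<bar>f x\<bar> \<le> B"
  shows "ennreal (\<integral>y. indicator Q y * \<bar>f x - f y\<bar> \<partial>lebesgue)
    \<le> ennreal (\<delta> powr s) * (\<integral>\<^sup>+y. indicator Q y * gagliardo_kernel s f x y \<partial>lebesgue)"
proof -
  have "integrable lebesgue (\<lambda>y. indicator Q y * \<bar>f x - f y\<bar>)"
  proof (rule integrable_indicator_mult_bounded[OF Q])
    show "(\<lambda>y. \<bar>f x - f y\<bar>) \<in> borel_measurable lebesgue"
      using fm by measurable
    show "\<bar>\<bar>f x - f y\<bar>\<bar> \<le> \<bar>f x\<bar> + B" for y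
      using bnd[of y] by simp
  qed
  then have "ennreal (\<integral>y. indicator Q y * \<bar>f x - f y\<bar> \<partial>lebesgue)
      = (\<integral>\<^sup>+y. ennreal (indicator Q y * \<bar>f x - f y\<bar>) \<partial>lebesgue)"
    by (subst nn_integral_eq_integral) auto
  also have "\<dots> \<le> (\<integral>\<^sup>+y. ennreal (\<delta> powr s) * (indicator Q y * gagliardo_kernel s f x y) \<partial>lebesgue)"
  proof (intro nn_integral_mono)
    fix y
    show "ennreal (indicator Q y * \<bar>f x - f y\<bar>)
        \<le> ennreal (\<delta> powr s) * (indicator Q y * gagliardo_kernel s f x y)"
    proof (cases "y \<in> Q \<and> y \<noteq> x")
      case True
      then have pos: "norm (x - y) > 0" by auto
      have "norm (x - y) powr s \<le> \<delta> powr s"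
        using diam True by (intro powr_mono2 s) auto
      then have "\<bar>f x - f y\<bar> \<le> \<delta> powr s * (\<bar>f x - f y\<bar> / norm (x - y) powr s)"
        using pos by (simp add: field_simps) (metis mult.commute mult_left_mono abs_ge_zero)
      then show ?thesis
        using True by (simp add: gagliardo_kernel_def ennreal_mult[symmetric] ennreal_leI)
    qed (auto simp: indicator_def)
  qed
  also have "\<dots> = ennreal (\<delta> powr s) * (\<integral>\<^sup>+y. indicator Q y * gagliardo_kernel s f x y \<partial>lebesgue)"
    by (rule nn_integral_cmult) (use Q borel_measurable_gagliardo_kernel_section[OF fm] in measurable)
  finally show ?thesis .
qed

lemma abs_diff_mean_on_le_gagliardo_kernel:
  fixes f :: "'a::euclidean_space \<Rightarrow> real"
  assumes Q: "Q \<in> sets lebesgue" "emeasure lebesgue Q < \<infinity>"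
    and \<mu>: "0 < \<mu>" "\<mu> \<le> measure lebesgue Q"
    and diam: "\<And>y. y \<in> Q \<Longrightarrow> norm (x - y) \<le> \<delta>" and s: "0 \<le> s"
    and fm: "f \<in> borel_measurable lebesgue" and bnd: "\<And>x. \<bar>f x\<bar> \<le> B"
  shows "ennreal \<bar>f x - mean_on Q f\<bar>
    \<le> ennreal (\<delta> powr s / \<mu>) * (\<integral>\<^sup>+y. indicator Q y * gagliardo_kernel s f x y \<partial>lebesgue)"
proof -
  define mQ where "mQ = measure lebesgue Q"
  have mQ: "mQ > 0" using \<mu> unfolding mQ_def by simp
  have "ennreal \<bar>f x - mean_on Q f\<bar>
      \<le> ennreal (1 / mQ) * ennreal (\<integral>y. indicator Q y * \<bar>f x - f y\<bar> \<partial>lebesgue)"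
    using abs_diff_mean_on_le[OF Q mQ[unfolded mQ_def] fm bnd, of x] mQ
    by (subst ennreal_mult[symmetric]) (auto intro: integral_nonneg_AE ennreal_leI simp: mQ_def)
  also have "\<dots> \<le> ennreal (1 / mQ) * (ennreal (\<delta> powr s)
      * (\<integral>\<^sup>+y. indicator Q y * gagliardo_kernel s f x y \<partial>lebesgue))"
    by (intro mult_left_mono integral_indicator_abs_diff_le_gagliardo_kernel[OF Q diam s fm bnd]) auto
  also have "ennreal (1 / mQ) * ennreal (\<delta> powr s) \<le> ennreal (\<delta> powr s / \<mu>)"
    using mQ \<mu> unfolding mQ_def
    by (subst ennreal_mult[symmetric]) (auto intro!: ennreal_leI divide_left_mono)
  then have "ennreal (1 / mQ) * (ennreal (\<delta> powr s)
      * (\<integral>\<^sup>+y. indicator Q y * gagliardo_kernel s f x y \<partial>lebesgue))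
      \<le> ennreal (\<delta> powr s / \<mu>) * (\<integral>\<^sup>+y. indicator Q y * gagliardo_kernel s f x y \<partial>lebesgue)"
    unfolding mult.assoc[symmetric] by (rule mult_right_mono) simp
  finally show ?thesis .
qed

lemma nn_integral_abs_diff_mean_on_le:
  fixes f :: "'a::euclidean_space \<Rightarrow> real"
  assumes Q: "Q \<in> sets lebesgue" "emeasure lebesgue Q < \<infinity>"
    and \<mu>: "0 < \<mu>" "\<mu> \<le> measure lebesgue Q"
    and diam: "\<And>x y. x \<in> Q \<Longrightarrow> y \<in> Q \<Longrightarrow> norm (x - y) \<le> \<delta>" and s: "0 \<le> s"
    and fm: "f \<in> borel_measurable lebesgue" and bnd: "\<And>x. \<bar>f x\<bar> \<le> B"
  shows "(\<integral>\<^sup>+x. indicator Q x * ennreal \<bar>f x - mean_on Q f\<bar> \<partial>lebesgue)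
    \<le> ennreal (\<delta> powr s / \<mu>) * gagliardo_on Q s f"
proof -
  have "(\<integral>\<^sup>+x. indicator Q x * ennreal \<bar>f x - mean_on Q f\<bar> \<partial>lebesgue)
      \<le> (\<integral>\<^sup>+x. ennreal (\<delta> powr s / \<mu>) * (indicator Q x *
           (\<integral>\<^sup>+y. indicator Q y * gagliardo_kernel s f x y \<partial>lebesgue)) \<partial>lebesgue)"
  proof (intro nn_integral_mono)
    fix x
    show "indicator Q x * ennreal \<bar>f x - mean_on Q f\<bar>
      \<le> ennreal (\<delta> powr s / \<mu>) * (indicator Q x *
           (\<integral>\<^sup>+y. indicator Q y * gagliardo_kernel s f x y \<partial>lebesgue))"
      using abs_diff_mean_on_le_gagliardo_kernel[OF Q \<mu> diam s fm bnd, of x] by (cases "x \<in> Q") auto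
  qed
  also have "\<dots> = ennreal (\<delta> powr s / \<mu>) * gagliardo_on Q s f"
    unfolding gagliardo_on_def
    by (rule nn_integral_cmult) (rule borel_measurable_gagliardo_on_integrand[OF fm Q(1)])
  finally show ?thesis .
qed

lemma sum_indicator_disjoint:
  fixes F :: "'i \<Rightarrow> 'b::semiring_1"
  assumes "finite Z" "disjoint_family_on Q Z" "z0 \<in> Z" "x \<in> Q z0"
  shows "(\<Sum>z\<in>Z. indicator (Q z) x * F z) = F z0"
proof -
  have "x \<notin> Q z" if "z \<in> Z - {z0}" for z
    using assms(2-4) that by (auto simp: disjoint_family_on_def)
  then have rest: "(\<Sum>z\<in>Z - {z0}. indicator (Q z) x * F z) = 0"
    by (intro sum.neutral) simp
  have "(\<Sum>z\<in>Z. indicator (Q z) x * F z)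
      = indicator (Q z0) x * F z0 + (\<Sum>z\<in>Z - {z0}. indicator (Q z) x * F z)"
    by (rule sum.remove[OF assms(1,3)])
  also have "\<dots> = F z0"
    unfolding rest using assms(4) by simp
  finally show ?thesis .
qed

lemma sum_gagliardo_on_le:
  fixes f :: "'a::euclidean_space \<Rightarrow> real"
  assumes fm: "f \<in> borel_measurable lebesgue" and "finite Z"
    and Q: "\<And>z. z \<in> Z \<Longrightarrow> Q z \<in> sets lebesgue" and disj: "disjoint_family_on Q Z"
  shows "(\<Sum>z\<in>Z. gagliardo_on (Q z) s f) \<le> gagliardo s f"
proof -
  have "(\<Sum>z\<in>Z. gagliardo_on (Q z) s f)
     = (\<integral>\<^sup>+x. (\<Sum>z\<in>Z. indicator (Q z) x *
          (\<integral>\<^sup>+y. indicator (Q z) y * gagliardo_kernel s f x y \<partial>lebesgue)) \<partial>lebesgue)"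
    unfolding gagliardo_on_def
    by (rule nn_integral_sum[symmetric]) (rule borel_measurable_gagliardo_on_integrand[OF fm Q])
  also have "\<dots> \<le> gagliardo s f"
    unfolding gagliardo_def
  proof (intro nn_integral_mono)
    fix x
    show "(\<Sum>z\<in>Z. indicator (Q z) x * (\<integral>\<^sup>+y. indicator (Q z) y * gagliardo_kernel s f x y \<partial>lebesgue))
      \<le> (\<integral>\<^sup>+y. gagliardo_kernel s f x y \<partial>lebesgue)"
    proof (cases "\<exists>z0\<in>Z. x \<in> Q z0")
      case True
      then obtain z0 where z0: "z0 \<in> Z" "x \<in> Q z0" by blast
      have "(\<integral>\<^sup>+y. indicator (Q z0) y * gagliardo_kernel s f x y \<partial>lebesgue)
          \<le> (\<integral>\<^sup>+y. gagliardo_kernel s f x y \<partial>lebesgue)"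
        by (intro nn_integral_mono) (auto simp: indicator_def)
      then show ?thesis
        by (subst sum_indicator_disjoint[OF \<open>finite Z\<close> disj z0])
    qed (auto simp: indicator_def)
  qed
  finally show ?thesis .
qed

lemma nn_integral_indicator_abs_diff_le:
  fixes g1 g2 :: "'a \<Rightarrow> real"
  assumes Q: "Q \<in> sets M" "emeasure M Q < \<infinity>"
    and [measurable]: "g1 \<in> borel_measurable M" "g2 \<in> borel_measurable M"
  shows "(\<integral>\<^sup>+x. indicator Q x * ennreal \<bar>g1 x - g2 x\<bar> \<partial>M)
    \<le> (\<integral>\<^sup>+x. indicator Q x * ennreal \<bar>g1 x - a1\<bar> \<partial>M) + ennreal (measure M Q * \<bar>a1 - a2\<bar>)
      + (\<integral>\<^sup>+x. indicator Q x * ennreal \<bar>g2 x - a2\<bar> \<partial>M)"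
proof -
  have "(\<integral>\<^sup>+x. indicator Q x * ennreal \<bar>g1 x - g2 x\<bar> \<partial>M)
     \<le> (\<integral>\<^sup>+x. (indicator Q x * ennreal \<bar>g1 x - a1\<bar> + ennreal \<bar>a1 - a2\<bar> * indicator Q x)
           + indicator Q x * ennreal \<bar>g2 x - a2\<bar> \<partial>M)"
  proof (intro nn_integral_mono)
    fix x
    have "ennreal \<bar>g1 x - g2 x\<bar> \<le> ennreal \<bar>g1 x - a1\<bar> + ennreal \<bar>a1 - a2\<bar> + ennreal \<bar>g2 x - a2\<bar>"
      by (simp add: ennreal_plus[symmetric] ennreal_leI del: ennreal_plus)
    then show "indicator Q x * ennreal \<bar>g1 x - g2 x\<bar> \<le> (indicator Q x * ennreal \<bar>g1 x - a1\<bar>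
        + ennreal \<bar>a1 - a2\<bar> * indicator Q x) + indicator Q x * ennreal \<bar>g2 x - a2\<bar>"
      by (auto simp: indicator_def)
  qed
  also have "\<dots> = (\<integral>\<^sup>+x. indicator Q x * ennreal \<bar>g1 x - a1\<bar> \<partial>M)
      + ennreal \<bar>a1 - a2\<bar> * emeasure M Q + (\<integral>\<^sup>+x. indicator Q x * ennreal \<bar>g2 x - a2\<bar> \<partial>M)"
    using Q(1) by (simp add: nn_integral_add nn_integral_cmult_indicator del: ennreal_plus)
  also have "ennreal \<bar>a1 - a2\<bar> * emeasure M Q = ennreal (measure M Q * \<bar>a1 - a2\<bar>)"
    using Q by (simp add: emeasure_eq_ennreal_measure less_top ennreal_mult'' mult.commute)
  finally show ?thesis .
qed

definition cell_cover :: "'i set \<Rightarrow> ('i \<Rightarrow> 'a::euclidean_space set) \<Rightarrow> real \<Rightarrow> real \<Rightarrow> 'a set \<Rightarrow> bool" where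
  "cell_cover Z Q \<mu> \<delta> S \<longleftrightarrow> finite Z \<and> disjoint_family_on Q Z \<and> S \<subseteq> (\<Union>z\<in>Z. Q z) \<and> 0 < \<mu> \<and>
     (\<forall>z\<in>Z. Q z \<in> sets lebesgue \<and> emeasure lebesgue (Q z) < \<infinity> \<and> \<mu> \<le> measure lebesgue (Q z) \<and>
        (\<forall>x\<in>Q z. \<forall>y\<in>Q z. norm (x - y) \<le> \<delta>))"

lemma nn_integral_abs_diff_le_cell_cover:
  fixes g1 g2 :: "'a::euclidean_space \<Rightarrow> real"
  assumes cover: "cell_cover Z Q \<mu> \<delta> S" and s: "0 \<le> s"
    and g1: "g1 \<in> borel_measurable lebesgue" "\<And>x. \<bar>g1 x\<bar> \<le> B" "\<And>x. g1 x \<noteq> 0 \<Longrightarrow> x \<in> S"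
    and g2: "g2 \<in> borel_measurable lebesgue" "\<And>x. \<bar>g2 x\<bar> \<le> B" "\<And>x. g2 x \<noteq> 0 \<Longrightarrow> x \<in> S"
  shows "(\<integral>\<^sup>+x. ennreal \<bar>g1 x - g2 x\<bar> \<partial>lebesgue)
    \<le> ennreal (\<delta> powr s / \<mu>) * gagliardo s g1
      + ennreal (\<Sum>z\<in>Z. measure lebesgue (Q z) * \<bar>mean_on (Q z) g1 - mean_on (Q z) g2\<bar>)
      + ennreal (\<delta> powr s / \<mu>) * gagliardo s g2"
proof -
  note cover = cover[unfolded cell_cover_def]
  have fin: "finite Z" and disj: "disjoint_family_on Q Z" and Qs: "\<And>z. z \<in> Z \<Longrightarrow> Q z \<in> sets lebesgue"
    using cover by auto
  define c where "c = \<delta> powr s / \<mu>"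
  define osc where "osc g z = (\<integral>\<^sup>+x. indicator (Q z) x * ennreal \<bar>g x - mean_on (Q z) g\<bar> \<partial>lebesgue)"
    for g z
  have osc_le: "(\<Sum>z\<in>Z. osc g z) \<le> ennreal c * gagliardo s g"
    if g: "g \<in> borel_measurable lebesgue" "\<And>x. \<bar>g x\<bar> \<le> B" for g
  proof -
    have "(\<Sum>z\<in>Z. osc g z) \<le> (\<Sum>z\<in>Z. ennreal c * gagliardo_on (Q z) s g)"
      unfolding osc_def c_def
      using cover by (intro sum_mono nn_integral_abs_diff_mean_on_le[OF _ _ _ _ _ s g]) auto
    also have "\<dots> \<le> ennreal c * gagliardo s g"
      unfolding sum_distrib_left[symmetric]
      by (intro mult_left_mono sum_gagliardo_on_le[OF g(1) fin Qs disj]) auto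
    finally show ?thesis .
  qed
  have split: "ennreal \<bar>g1 x - g2 x\<bar> = (\<Sum>z\<in>Z. indicator (Q z) x * ennreal \<bar>g1 x - g2 x\<bar>)" for x
  proof (cases "g1 x = 0 \<and> g2 x = 0")
    case False
    then obtain z0 where "z0 \<in> Z" "x \<in> Q z0" using cover g1(3) g2(3) by blast
    then show ?thesis by (simp add: sum_indicator_disjoint[OF fin disj])
  qed simp
  have "(\<integral>\<^sup>+x. ennreal \<bar>g1 x - g2 x\<bar> \<partial>lebesgue)
      = (\<integral>\<^sup>+x. (\<Sum>z\<in>Z. indicator (Q z) x * ennreal \<bar>g1 x - g2 x\<bar>) \<partial>lebesgue)"
    by (intro nn_integral_cong split)
  also have "\<dots> = (\<Sum>z\<in>Z. \<integral>\<^sup>+x. indicator (Q z) x * ennreal \<bar>g1 x - g2 x\<bar> \<partial>lebesgue)"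
    by (rule nn_integral_sum) (use Qs g1 g2 in measurable)
  also have "\<dots> \<le> (\<Sum>z\<in>Z. osc g1 z
      + ennreal (measure lebesgue (Q z) * \<bar>mean_on (Q z) g1 - mean_on (Q z) g2\<bar>) + osc g2 z)"
    unfolding osc_def using cover by (intro sum_mono nn_integral_indicator_abs_diff_le g1 g2) auto
  also have "\<dots> = (\<Sum>z\<in>Z. osc g1 z)
      + ennreal (\<Sum>z\<in>Z. measure lebesgue (Q z) * \<bar>mean_on (Q z) g1 - mean_on (Q z) g2\<bar>)
      + (\<Sum>z\<in>Z. osc g2 z)"
    by (simp add: sum.distrib del: ennreal_plus)
  also have "\<dots> \<le> ennreal c * gagliardo s g1
      + ennreal (\<Sum>z\<in>Z. measure lebesgue (Q z) * \<bar>mean_on (Q z) g1 - mean_on (Q z) g2\<bar>)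
      + ennreal c * gagliardo s g2"
    by (intro add_mono order.refl osc_le g1(1,2) g2(1,2))
  finally show ?thesis unfolding c_def .
qed

section \<open>Compactness under a bound on the Gagliardo seminorm\<close>

lemma weighted_sum_abs_diff_eventually_less:
  fixes a :: "'i \<Rightarrow> nat \<Rightarrow> real"
  assumes "finite Z" and m: "\<And>z. z \<in> Z \<Longrightarrow> 0 \<le> m z"
    and conv: "\<And>z. z \<in> Z \<Longrightarrow> convergent (a z)" and e: "0 < e"
  shows "\<exists>N. \<forall>i\<ge>N. \<forall>j\<ge>N. (\<Sum>z\<in>Z. m z * \<bar>a z i - a z j\<bar>) < e"
proof -
  define S where "S = (\<Sum>z\<in>Z. m z)"
  have S: "0 \<le> S"
    unfolding S_def using m by (simp add: sum_nonneg)
  define \<epsilon> where "\<epsilon> = e / (2 * (S + 1))"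
  have "0 < \<epsilon>"
    unfolding \<epsilon>_def using e S by simp
  then have "\<forall>\<^sub>F n in sequentially. \<forall>z\<in>Z. \<bar>a z n - lim (a z)\<bar> < \<epsilon>"
    using conv \<open>finite Z\<close>
    by (intro eventually_ball_finite ballI) (auto simp: convergent_LIMSEQ_iff tendsto_iff dist_real_def)
  then obtain N where N: "\<And>n z. N \<le> n \<Longrightarrow> z \<in> Z \<Longrightarrow> \<bar>a z n - lim (a z)\<bar> < \<epsilon>"
    unfolding eventually_sequentially by blast
  have "(\<Sum>z\<in>Z. m z * \<bar>a z i - a z j\<bar>) < e" if ij: "N \<le> i" "N \<le> j" for i j
  proof -
    have "(\<Sum>z\<in>Z. m z * \<bar>a z i - a z j\<bar>) \<le> (\<Sum>z\<in>Z. m z * (2 * \<epsilon>))"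
    proof (intro sum_mono mult_left_mono)
      fix z assume "z \<in> Z"
      from N[OF ij(1) this] N[OF ij(2) this] show "\<bar>a z i - a z j\<bar> \<le> 2 * \<epsilon>"
        by linarith
    qed (use m in auto)
    also have "\<dots> = 2 * \<epsilon> * S"
      unfolding S_def by (simp add: sum_distrib_right mult.commute)
    also have "\<dots> < e"
      unfolding \<epsilon>_def using e S by (simp add: field_simps)
    finally show ?thesis .
  qed
  then show ?thesis by blast
qed

lemma L1_cauchy_of_convergent_means:
  fixes f :: "nat \<Rightarrow> 'a::euclidean_space \<Rightarrow> real"
  assumes cover: "\<And>m. cell_cover (Z m) (Q m) (\<mu> m) (\<delta> m) S"
    and small: "(\<lambda>m. \<delta> m powr s / \<mu> m) \<longlonglongrightarrow> 0" and s: "0 \<le> s"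
    and fm: "\<And>n. f n \<in> borel_measurable lebesgue" and bnd: "\<And>n x. \<bar>f n x\<bar> \<le> B"
    and supp: "\<And>n x. f n x \<noteq> 0 \<Longrightarrow> x \<in> S" and J: "\<And>n. gagliardo s (f n) \<le> ennreal C"
    and means: "\<And>m z. z \<in> Z m \<Longrightarrow> convergent (\<lambda>n. mean_on (Q m z) (f n))"
    and e: "0 < e"
  shows "\<exists>N. \<forall>i\<ge>N. \<forall>j\<ge>N. (\<integral>\<^sup>+x. ennreal \<bar>f i x - f j x\<bar> \<partial>lebesgue) < ennreal e"
proof -
  define C' where "C' = max C 0"
  have C': "0 \<le> C'" "\<And>n. gagliardo s (f n) \<le> ennreal C'"
    unfolding C'_def by (auto intro: order.trans[OF J] ennreal_leI)
  have "0 < e / (4 * (C' + 1))"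
    using e C' by simp
  from order_tendstoD(2)[OF small this] obtain m where m: "\<delta> m powr s / \<mu> m < e / (4 * (C' + 1))"
    unfolding eventually_sequentially by blast
  define c where "c = \<delta> m powr s / \<mu> m"
  have fin: "finite (Z m)" and "0 < \<mu> m"
    using cover[of m] unfolding cell_cover_def by auto
  then have c0: "0 \<le> c"
    unfolding c_def by simp
  have cC: "c * C' < e / 4"
  proof -
    have "c * C' \<le> e / (4 * (C' + 1)) * C'"
      using m C' unfolding c_def by (intro mult_right_mono) auto
    also have "\<dots> < e / 4"
      using e C' by (simp add: field_simps)
    finally show ?thesis .
  qed
  define X where "X i j = (\<Sum>z\<in>Z m. measure lebesgue (Q m z) *
    \<bar>mean_on (Q m z) (f i) - mean_on (Q m z) (f j)\<bar>)" for i j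
  have "\<exists>N. \<forall>i\<ge>N. \<forall>j\<ge>N. X i j < e / 2"
    unfolding X_def using e by (intro weighted_sum_abs_diff_eventually_less fin means) auto
  then obtain N where N: "\<And>i j. N \<le> i \<Longrightarrow> N \<le> j \<Longrightarrow> X i j < e / 2"
    by blast
  have "(\<integral>\<^sup>+x. ennreal \<bar>f i x - f j x\<bar> \<partial>lebesgue) < ennreal e" if "N \<le> i" "N \<le> j" for i j
  proof -
    have X0: "0 \<le> X i j"
      unfolding X_def by (simp add: sum_nonneg)
    have "(\<integral>\<^sup>+x. ennreal \<bar>f i x - f j x\<bar> \<partial>lebesgue)
        \<le> ennreal c * gagliardo s (f i) + ennreal (X i j) + ennreal c * gagliardo s (f j)"
      unfolding c_def X_def by (rule nn_integral_abs_diff_le_cell_cover[OF cover s fm bnd supp fm bnd supp])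
    also have "\<dots> \<le> ennreal (c * C') + ennreal (X i j) + ennreal (c * C')"
      using C' by (simp add: ennreal_mult'' add_mono mult_left_mono)
    also have "\<dots> = ennreal (c * C' + X i j + c * C')"
      using c0 C' X0 by (simp add: ennreal_plus[symmetric] del: ennreal_plus)
    also have "\<dots> < ennreal e"
      using cC N[OF that] by (intro ennreal_lessI e) linarith
    finally show ?thesis .
  qed
  then show ?thesis by blast
qed

lemma integrable_of_cell_cover:
  fixes f :: "'a::euclidean_space \<Rightarrow> real"
  assumes cover: "cell_cover Z Q \<mu> \<delta> S" and fm: "f \<in> borel_measurable lebesgue"
    and bnd: "\<And>x. \<bar>f x\<bar> \<le> B" and supp: "\<And>x. f x \<noteq> 0 \<Longrightarrow> x \<in> S"
  shows "integrable lebesgue f"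
proof -
  note cells = cover[unfolded cell_cover_def]
  define A where "A = (\<Union>z\<in>Z. Q z)"
  have A: "A \<in> sets lebesgue"
    unfolding A_def using cells by auto
  have "emeasure lebesgue A \<le> (\<Sum>z\<in>Z. emeasure lebesgue (Q z))"
    unfolding A_def using cells by (intro emeasure_subadditive_finite) auto
  also have "\<dots> < \<infinity>"
  proof -
    have "finite Z" "\<forall>z\<in>Z. emeasure lebesgue (Q z) < \<infinity>"
      using cells by blast+
    then show ?thesis
      using ennreal_sum_less_top by (metis infinity_ennreal_def)
  qed
  finally have "emeasure lebesgue A < \<infinity>" .
  moreover have "f x = 0" if "x \<notin> A" for x
    using supp that cells unfolding A_def by blast
  ultimately show ?thesis
    by (intro integrableI_bounded_set[OF A fm, where B=B] AE_I2) (use bnd in auto)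
qed

lemma AE_convergent_subseq_of_cell_covers:
  fixes f :: "nat \<Rightarrow> 'a::euclidean_space \<Rightarrow> real"
  assumes cover: "\<And>m. cell_cover (Z m) (Q m) (\<mu> m) (\<delta> m) S"
    and small: "(\<lambda>m. \<delta> m powr s / \<mu> m) \<longlonglongrightarrow> 0" and s: "0 \<le> s"
    and fm: "\<And>n. f n \<in> borel_measurable lebesgue" and bnd: "\<And>n x. \<bar>f n x\<bar> \<le> B"
    and supp: "\<And>n x. f n x \<noteq> 0 \<Longrightarrow> x \<in> S" and J: "\<And>n. gagliardo s (f n) \<le> ennreal C"
  shows "\<exists>r. strict_mono r \<and> (AE x in lebesgue. convergent (\<lambda>n. f (r n) x))"
proof -
  note cells = cover[unfolded cell_cover_def]
  have "countable (SIGMA m:UNIV. Z m)"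
    by (rule countable_SIGMA) (use cells in \<open>auto intro: countable_finite\<close>)
  moreover have "bounded (range (\<lambda>n. mean_on (Q m z) (f n)))" if "(m, z) \<in> (SIGMA m:UNIV. Z m)" for m z
  proof -
    have "Q m z \<in> sets lebesgue" "emeasure lebesgue (Q m z) < \<infinity>"
      using that cells[of m] by blast+
    from abs_mean_on_le[OF this fm bnd] show ?thesis
      by (intro boundedI[of _ B]) auto
  qed
  ultimately obtain r where r: "strict_mono r"
    and means: "\<And>m z. z \<in> Z m \<Longrightarrow> convergent (\<lambda>n. mean_on (Q m z) (f (r n)))"
    using bounded_family_convergent_subseq[of "SIGMA m:UNIV. Z m" "\<lambda>(m, z) n. mean_on (Q m z) (f n)"]
    by auto
  have int: "integrable lebesgue (f n)" for n
    by (rule integrable_of_cell_cover[OF cover fm bnd supp])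
  have "\<exists>N. \<forall>i\<ge>N. \<forall>j\<ge>N. (LINT x|lebesgue. norm (f (r i) x - f (r j) x)) < e" if e: "0 < e" for e
  proof -
    have "\<exists>N. \<forall>i\<ge>N. \<forall>j\<ge>N. (\<integral>\<^sup>+x. ennreal \<bar>f (r i) x - f (r j) x\<bar> \<partial>lebesgue) < ennreal e"
      by (rule L1_cauchy_of_convergent_means[OF cover small s _ _ _ _ means e]) (use fm bnd supp J in auto)
    moreover have "(\<integral>\<^sup>+x. ennreal \<bar>f i x - f j x\<bar> \<partial>lebesgue) = ennreal (LINT x|lebesgue. \<bar>f i x - f j x\<bar>)"
      for i j
      using int by (intro nn_integral_eq_integral) auto
    moreover have "0 \<le> (LINT x|lebesgue. \<bar>f i x - f j x\<bar>)" for i j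
      by simp
    ultimately show ?thesis
      by (simp add: ennreal_less_iff)
  qed
  then obtain r' where "strict_mono r'" "AE x in lebesgue. Cauchy (\<lambda>n. f (r (r' n)) x)"
    using cauchy_L1_AE_cauchy_subseq[of lebesgue "\<lambda>n. f (r n)"] int by blast
  then show ?thesis
    using r by (intro exI[of _ "r \<circ> r'"]) (auto simp: strict_mono_o Cauchy_convergent_iff)
qed

definition grid_cell :: "nat \<Rightarrow> ('a::euclidean_space \<Rightarrow> int) \<Rightarrow> 'a set" where
  "grid_cell m z = {x. \<forall>b\<in>Basis. \<lfloor>real (Suc m) * (x \<bullet> b)\<rfloor> = z b}"

lemma grid_cell_borel: "grid_cell m z \<in> sets (borel :: 'a::euclidean_space measure)"
proof -
  have "grid_cell m z = (\<Inter>b\<in>Basis. {x. \<lfloor>real (Suc m) * (x \<bullet> b)\<rfloor> = z b})"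
    unfolding grid_cell_def by auto
  also have "\<dots> \<in> sets borel"
    by (intro sets.finite_INT) (auto intro!: pred_intros_logic measurable_cong)
  finally show ?thesis .
qed

lemma grid_cell_box:
  fixes z :: "'a::euclidean_space \<Rightarrow> int" and m :: nat
  defines "l \<equiv> (\<Sum>b\<in>Basis. (real_of_int (z b) / real (Suc m)) *\<^sub>R b :: 'a)"
    and "u \<equiv> (\<Sum>b\<in>Basis. ((real_of_int (z b) + 1) / real (Suc m)) *\<^sub>R b :: 'a)"
  shows "box l u \<subseteq> grid_cell m z" "grid_cell m z \<subseteq> cbox l u"
proof -
  let ?k = "real (Suc m)"
  have k: "0 < ?k" by simp
  have lb: "l \<bullet> b = z b / ?k" and ub: "u \<bullet> b = (z b + 1) / ?k" if "b \<in> Basis" for b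
    unfolding l_def u_def using that by (simp_all add: inner_sum_left_Basis)
  show "box l u \<subseteq> grid_cell m z"
  proof
    fix x assume x: "x \<in> box l u"
    have "\<lfloor>?k * (x \<bullet> b)\<rfloor> = z b" if b: "b \<in> Basis" for b
    proof -
      have "z b / ?k < x \<bullet> b" "x \<bullet> b < (z b + 1) / ?k"
        using x b lb ub by (auto simp: mem_box)
      then have "z b < ?k * (x \<bullet> b)" "?k * (x \<bullet> b) < z b + 1"
        by (auto simp: field_simps)
      then show ?thesis by linarith
    qed
    then show "x \<in> grid_cell m z"
      unfolding grid_cell_def by blast
  qed
  show "grid_cell m z \<subseteq> cbox l u"
  proof
    fix x assume x: "x \<in> grid_cell m z"
    have "l \<bullet> b \<le> x \<bullet> b \<and> x \<bullet> b \<le> u \<bullet> b" if b: "b \<in> Basis" for b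
    proof -
      have "\<lfloor>?k * (x \<bullet> b)\<rfloor> = z b"
        using x b unfolding grid_cell_def by auto
      then have "z b \<le> ?k * (x \<bullet> b)" "?k * (x \<bullet> b) \<le> z b + 1"
        by linarith+
      then show ?thesis
        unfolding lb[OF b] ub[OF b] pos_divide_le_eq[OF k] pos_le_divide_eq[OF k]
        by (simp add: mult.commute)
    qed
    then show "x \<in> cbox l u"
      unfolding mem_box by blast
  qed
qed

lemma grid_cell_measure:
  fixes z :: "'a::euclidean_space \<Rightarrow> int"
  shows "emeasure lebesgue (grid_cell m z) < \<infinity>"
    and "(1 / real (Suc m)) ^ DIM('a) \<le> measure lebesgue (grid_cell m z)"
proof -
  define l where "l = (\<Sum>b\<in>Basis. (real_of_int (z b) / real (Suc m)) *\<^sub>R b :: 'a)"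
  define u where "u = (\<Sum>b\<in>Basis. ((real_of_int (z b) + 1) / real (Suc m)) *\<^sub>R b :: 'a)"
  have box: "box l u \<subseteq> grid_cell m z" "grid_cell m z \<subseteq> cbox l u"
    using grid_cell_box[where z=z and m=m] unfolding l_def u_def by auto
  have eq: "emeasure lebesgue (grid_cell m z) = emeasure lborel (grid_cell m z)"
    using grid_cell_borel[of m z] by (simp add: emeasure_completion)
  have "emeasure lborel (grid_cell m z) \<le> emeasure lborel (cbox l u)"
    using box(2) by (intro emeasure_mono) auto
  also have "\<dots> < \<infinity>"
    by (rule emeasure_lborel_cbox_finite)
  finally show fin: "emeasure lebesgue (grid_cell m z) < \<infinity>"
    using eq by simp
  have lu: "(u - l) \<bullet> b = 1 / real (Suc m)" if "b \<in> Basis" for b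
    using that unfolding l_def u_def by (simp add: inner_diff_left inner_sum_left_Basis add_divide_distrib)
  then have "\<forall>b\<in>Basis. l \<bullet> b \<le> u \<bullet> b"
    by (metis inner_diff_left diff_ge_0_iff_ge less_eq_real_def of_nat_0_less_iff zero_less_Suc
        zero_less_divide_1_iff)
  then have "emeasure lborel (box l u) = ennreal ((1 / real (Suc m)) ^ DIM('a))"
    unfolding emeasure_lborel_box_eq using lu by (simp add: prod_constant)
  moreover have "emeasure lborel (box l u) \<le> emeasure lborel (grid_cell m z)"
    by (rule emeasure_mono[OF box(1)]) (simp add: grid_cell_borel)
  ultimately have "ennreal ((1 / real (Suc m)) ^ DIM('a)) \<le> emeasure lebesgue (grid_cell m z)"
    using eq by simp
  then show "(1 / real (Suc m)) ^ DIM('a) \<le> measure lebesgue (grid_cell m z)"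
    using fin by (simp add: emeasure_eq_ennreal_measure less_top)
qed

lemma grid_cell_diameter:
  fixes x y :: "'a::euclidean_space"
  assumes "x \<in> grid_cell m z" "y \<in> grid_cell m z"
  shows "norm (x - y) \<le> real DIM('a) / real (Suc m)"
proof -
  let ?k = "real (Suc m)"
  have "\<bar>(x - y) \<bullet> b\<bar> \<le> 1 / ?k" if b: "b \<in> Basis" for b :: 'a
  proof -
    have "\<lfloor>?k * (x \<bullet> b)\<rfloor> = z b" "\<lfloor>?k * (y \<bullet> b)\<rfloor> = z b"
      using assms b unfolding grid_cell_def by auto
    then have "\<bar>?k * (x \<bullet> b) - ?k * (y \<bullet> b)\<bar> \<le> 1"
      by linarith
    then have "?k * \<bar>(x - y) \<bullet> b\<bar> \<le> 1"
      by (simp add: inner_diff_left right_diff_distrib[symmetric] abs_mult)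
    then show ?thesis
      by (simp add: field_simps)
  qed
  then have "(\<Sum>b\<in>Basis. \<bar>(x - y) \<bullet> b\<bar>) \<le> (\<Sum>b\<in>(Basis::'a set). 1 / ?k)"
    by (intro sum_mono) auto
  then show ?thesis
    using norm_le_l1[of "x - y"] by simp
qed

lemma grid_cell_cover:
  fixes m :: nat and R :: real
  defines "N \<equiv> \<lceil>real (Suc m) * R\<rceil>"
  shows "cell_cover (PiE Basis (\<lambda>_. {-N..N})) (grid_cell m) ((1 / real (Suc m)) ^ DIM('a))
    (real DIM('a) / real (Suc m)) (cball (0::'a::euclidean_space) R)"
proof -
  let ?k = "real (Suc m)"
  have "x \<in> (\<Union>z\<in>PiE Basis (\<lambda>_. {-N..N}). grid_cell m z)" if x: "x \<in> cball (0::'a) R" for x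
  proof
    show "x \<in> grid_cell m (restrict (\<lambda>b. \<lfloor>?k * (x \<bullet> b)\<rfloor>) Basis)"
      unfolding grid_cell_def by auto
    have "\<lfloor>?k * (x \<bullet> b)\<rfloor> \<in> {-N..N}" if b: "b \<in> Basis" for b :: 'a
    proof -
      have "\<bar>x \<bullet> b\<bar> \<le> R"
        using Basis_le_norm[OF b, of x] x by simp
      then have "\<bar>?k * (x \<bullet> b)\<bar> \<le> ?k * R"
        by (simp add: abs_mult mult_left_mono)
      then have "- (?k * R) \<le> ?k * (x \<bullet> b)" "?k * (x \<bullet> b) \<le> ?k * R"
        by linarith+
      from floor_mono[OF this(1)] floor_mono[OF this(2)] floor_le_ceiling[of "?k * R"]
      show ?thesis
        unfolding N_def ceiling_def by simp
    qed
    then show "restrict (\<lambda>b. \<lfloor>?k * (x \<bullet> b)\<rfloor>) Basis \<in> PiE Basis (\<lambda>_. {-N..N})"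
      by auto
  qed
  moreover have "disjoint_family_on (grid_cell m) (PiE Basis (\<lambda>_. {-N..N}))"
    unfolding disjoint_family_on_def
  proof (intro ballI impI)
    fix z z' assume "z \<in> PiE Basis (\<lambda>_. {-N..N})" "z' \<in> PiE Basis (\<lambda>_. {-N..N})" "z \<noteq> z'"
    then obtain b where "b \<in> Basis" "z b \<noteq> z' b"
      by (metis PiE_ext)
    then show "grid_cell m z \<inter> grid_cell m z' = {}"
      unfolding grid_cell_def by auto
  qed
  moreover have "finite (PiE Basis (\<lambda>_. {-N..N}))"
    by (intro finite_PiE) auto
  moreover have "grid_cell m z \<in> sets lebesgue" for z :: "'a \<Rightarrow> int"
    using grid_cell_borel[of m z] by (simp add: sets_completionI_sets)
  ultimately show ?thesis
    unfolding cell_cover_def using grid_cell_measure grid_cell_diameter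
    by (auto simp del: emeasure_completion)
qed

text \<open>On the grid of mesh \<open>1 / (m + 1)\<close> the factor \<open>\<delta> powr s / \<mu>\<close> equals
  \<open>d powr (d + \<alpha>) * (m + 1) powr - \<alpha>\<close>; this is where \<open>0 < \<alpha>\<close> is needed.\<close>

lemma AE_convergent_subseq_of_gagliardo_bounded:
  fixes f :: "nat \<Rightarrow> 'a::euclidean_space \<Rightarrow> real"
  assumes fm: "\<And>n. f n \<in> borel_measurable lebesgue" and bnd: "\<And>n x. \<bar>f n x\<bar> \<le> B"
    and supp: "\<And>n x. f n x \<noteq> 0 \<Longrightarrow> norm x \<le> R"
    and J: "\<And>n. gagliardo (real DIM('a) + \<alpha>) (f n) \<le> ennreal C" and \<alpha>: "0 < \<alpha>"
  shows "\<exists>r. strict_mono r \<and> (AE x in lebesgue. convergent (\<lambda>n. f (r n) x))"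
proof (rule AE_convergent_subseq_of_cell_covers[OF grid_cell_cover _ _ fm bnd _ J])
  define d where "d = real DIM('a)"
  have d: "1 \<le> d"
    unfolding d_def by (simp add: DIM_positive Suc_le_eq)
  have "(d / real (Suc m)) powr (d + \<alpha>) / (1 / real (Suc m)) ^ DIM('a)
      = d powr (d + \<alpha>) * real (Suc m) powr (- \<alpha>)" for m
    using d by (simp add: powr_divide powr_add powr_realpow powr_minus field_simps power_one_over d_def)
  moreover have "(\<lambda>m. d powr (d + \<alpha>) * real (Suc m) powr (- \<alpha>)) \<longlonglongrightarrow> d powr (d + \<alpha>) * 0"
    using filterlim_compose[OF filterlim_real_sequentially filterlim_Suc] \<alpha>
    by (intro tendsto_mult tendsto_const tendsto_neg_powr) (auto simp: o_def)
  ultimately show "(\<lambda>m. (real DIM('a) / real (Suc m)) powr (real DIM('a) + \<alpha>)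
      / (1 / real (Suc m)) ^ DIM('a)) \<longlonglongrightarrow> 0"
    unfolding d_def by simp
  show "0 \<le> real DIM('a) + \<alpha>"
    using \<alpha> by simp
  show "x \<in> cball 0 R" if "f n x \<noteq> 0" for n x
    using supp[OF that] by simp
qed

section \<open>The regularizer R_alpha\<close>

lemma sets_lebesgue_level_set:
  assumes "\<Omega> \<in> sets lebesgue" "w \<in> borel_measurable (lebesgue_on \<Omega>)"
  shows "level_set \<Omega> w v \<in> sets lebesgue"
proof -
  have "{x \<in> space (lebesgue_on \<Omega>). w x = real_of_int v} \<in> sets (lebesgue_on \<Omega>)"
    using assms(2) by measurable
  then show ?thesis
    using assms(1) by (simp add: sets_restrict_space_iff level_set_def)
qed

text \<open>The factor \<open>1 - \<alpha>\<close> is kept inside the kernel, so that \<^const>\<open>R_alpha\<close> is a single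
  double integral to which Fatou's lemma applies.\<close>

definition level_kernel ::
  "real \<Rightarrow> int set \<Rightarrow> 'a::euclidean_space set \<Rightarrow> ('a \<Rightarrow> real) \<Rightarrow> 'a \<Rightarrow> 'a \<Rightarrow> ennreal" where
  "level_kernel \<alpha> W \<Omega> w x y = ennreal (1 - \<alpha>) * (\<Sum>v\<in>W. ennreal (real_of_int \<bar>v\<bar>) *
     gagliardo_kernel (real DIM('a) + \<alpha>) (indicator (level_set \<Omega> w v)) x y)"

lemma borel_measurable_level_kernel:
  assumes "\<And>v. level_set \<Omega> w v \<in> sets lebesgue"
  shows "(\<lambda>(x, y). level_kernel \<alpha> W \<Omega> w x y) \<in> borel_measurable (lebesgue \<Otimes>\<^sub>M lebesgue)"
proof -
  have "(\<lambda>z. gagliardo_kernel (real DIM('a) + \<alpha>) (indicator (level_set \<Omega> w v)) (fst z) (snd z))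
      \<in> borel_measurable (lebesgue \<Otimes>\<^sub>M (lebesgue :: 'a measure))" for v
    using borel_measurable_gagliardo_kernel[of "indicator (level_set \<Omega> w v)"] assms
    by (simp add: case_prod_beta')
  then show ?thesis
    unfolding level_kernel_def case_prod_beta' by measurable
qed

lemma R_alpha_eq_nn_integral_level_kernel:
  fixes w :: "'a::euclidean_space \<Rightarrow> real"
  assumes lev: "\<And>v. level_set \<Omega> w v \<in> sets lebesgue"
  shows "R_alpha \<alpha> W \<Omega> w = (\<integral>\<^sup>+x. (\<integral>\<^sup>+y. level_kernel \<alpha> W \<Omega> w x y \<partial>lebesgue) \<partial>lebesgue)"
proof -
  define F where "F v x y = ennreal (1 - \<alpha>) * ennreal (real_of_int \<bar>v\<bar>) *
    gagliardo_kernel (real DIM('a) + \<alpha>) (indicator (level_set \<Omega> w v)) x y" for v x y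
  have ind: "indicator (level_set \<Omega> w v) \<in> borel_measurable lebesgue" for v
    using lev by measurable
  have Fy: "(\<lambda>y. F v x y) \<in> borel_measurable lebesgue" for v x
    unfolding F_def using borel_measurable_gagliardo_kernel_section[OF ind] by measurable
  have "(\<lambda>(x, y). F v x y) \<in> borel_measurable (lebesgue \<Otimes>\<^sub>M lebesgue)" for v
    unfolding F_def using borel_measurable_gagliardo_kernel[OF ind]
    by (simp add: case_prod_beta' borel_measurable_times_ennreal)
  then have Fx: "(\<lambda>x. \<integral>\<^sup>+y. F v x y \<partial>lebesgue) \<in> borel_measurable lebesgue" for v
    by (rule sigma_finite_measure.borel_measurable_nn_integral[OF sigma_finite_lebesgue])
  have "(\<integral>\<^sup>+x. (\<integral>\<^sup>+y. level_kernel \<alpha> W \<Omega> w x y \<partial>lebesgue) \<partial>lebesgue)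
      = (\<integral>\<^sup>+x. (\<integral>\<^sup>+y. (\<Sum>v\<in>W. F v x y) \<partial>lebesgue) \<partial>lebesgue)"
    unfolding level_kernel_def F_def by (simp add: sum_distrib_left mult.assoc)
  also have "\<dots> = (\<Sum>v\<in>W. \<integral>\<^sup>+x. (\<integral>\<^sup>+y. F v x y \<partial>lebesgue) \<partial>lebesgue)"
    by (simp add: nn_integral_sum Fy Fx)
  also have "\<dots> = R_alpha \<alpha> W \<Omega> w"
    unfolding R_alpha_def F_def frac_perimeter_eq_gagliardo gagliardo_def sum_distrib_left
    using ind borel_measurable_gagliardo_kernel_section[OF ind]
      sigma_finite_measure.borel_measurable_nn_integral[OF sigma_finite_lebesgue
        borel_measurable_gagliardo_kernel[OF ind]]
    by (simp add: nn_integral_cmult mult.assoc case_prod_beta')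
  finally show ?thesis ..
qed

lemma R_alpha_le_liminf:
  fixes w :: "nat \<Rightarrow> 'a::euclidean_space \<Rightarrow> real"
  assumes \<Omega>: "\<Omega> \<in> sets lebesgue"
    and wm: "\<And>k. w k \<in> borel_measurable (lebesgue_on \<Omega>)" and wl: "wl \<in> borel_measurable (lebesgue_on \<Omega>)"
    and ev: "AE x in lebesgue_on \<Omega>. \<forall>\<^sub>F k in sequentially. w k x = wl x"
  shows "R_alpha \<alpha> W \<Omega> wl \<le> liminf (\<lambda>k. R_alpha \<alpha> W \<Omega> (w k))"
proof -
  define P where "P x \<longleftrightarrow> (x \<in> \<Omega> \<longrightarrow> (\<forall>\<^sub>F k in sequentially. w k x = wl x))" for x
  have lev: "level_set \<Omega> (w k) v \<in> sets lebesgue" "level_set \<Omega> wl v \<in> sets lebesgue" for k v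
    using sets_lebesgue_level_set[OF \<Omega>] wm wl by blast+
  have AE_P: "AE x in lebesgue. P x"
    using ev \<Omega> unfolding P_def by (simp add: AE_restrict_space_iff)
  have same_levels: "\<forall>\<^sub>F k in sequentially. \<forall>v. x \<in> level_set \<Omega> (w k) v \<longleftrightarrow> x \<in> level_set \<Omega> wl v"
    if "P x" for x
    using that unfolding P_def level_set_def by (cases "x \<in> \<Omega>") (auto elim: eventually_mono)
  have "\<forall>\<^sub>F k in sequentially. level_kernel \<alpha> W \<Omega> (w k) x y = level_kernel \<alpha> W \<Omega> wl x y"
    if "P x" "P y" for x y
    using same_levels[OF that(1)] same_levels[OF that(2)]
    by eventually_elim (simp add: level_kernel_def gagliardo_kernel_def indicator_def)
  then show ?thesis
    unfolding R_alpha_eq_nn_integral_level_kernel[OF lev(1)] R_alpha_eq_nn_integral_level_kernel[OF lev(2)]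
    by (rule nn_integral_nn_integral_le_liminf[OF sigma_finite_lebesgue borel_measurable_level_kernel[OF lev(1)] AE_P])
qed

definition level_step :: "int set \<Rightarrow> 'a set \<Rightarrow> ('a \<Rightarrow> real) \<Rightarrow> 'a \<Rightarrow> real" where
  "level_step W \<Omega> w x = (\<Sum>v\<in>W. real_of_int v * indicator (level_set \<Omega> w v) x)"

lemma abs_le_sum_abs_of_mem:
  assumes "finite W" "t \<in> real_of_int ` W"
  shows "\<bar>t\<bar> \<le> (\<Sum>v\<in>W. \<bar>real_of_int v\<bar>)"
  using assms member_le_sum[of _ W "\<lambda>v. real_of_int \<bar>v\<bar>"] by auto

lemma abs_level_step_le: "finite W \<Longrightarrow> \<bar>level_step W \<Omega> w x\<bar> \<le> (\<Sum>v\<in>W. \<bar>real_of_int v\<bar>)"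
  unfolding level_step_def
  by (rule order.trans[OF sum_abs]) (intro sum_mono, auto simp: abs_mult indicator_def)

lemma level_step_outside: "x \<notin> \<Omega> \<Longrightarrow> level_step W \<Omega> w x = 0"
  unfolding level_step_def level_set_def by simp

lemma level_step_eq:
  assumes "finite W" "x \<in> \<Omega>" "w x \<in> real_of_int ` W"
  shows "level_step W \<Omega> w x = w x"
proof -
  obtain v0 where v0: "v0 \<in> W" "w x = real_of_int v0"
    using assms(3) by blast
  have "level_step W \<Omega> w x = (\<Sum>v\<in>W. if v = v0 then real_of_int v0 else 0)"
    unfolding level_step_def using assms(2) v0(2) by (intro sum.cong) (auto simp: level_set_def)
  then show ?thesis
    using assms(1) v0 by simp
qed

lemma borel_measurable_level_step:
  assumes "\<And>v. level_set \<Omega> w v \<in> sets lebesgue"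
  shows "level_step W \<Omega> w \<in> borel_measurable lebesgue"
proof -
  have "indicator (level_set \<Omega> w v) \<in> borel_measurable lebesgue" for v
    using assms by measurable
  then show ?thesis
    unfolding level_step_def[abs_def] by measurable
qed

lemma gagliardo_kernel_level_step_le:
  assumes "finite W"
  shows "ennreal (1 - \<alpha>) * gagliardo_kernel (real DIM('a) + \<alpha>) (level_step W \<Omega> w) x y
    \<le> level_kernel \<alpha> W \<Omega> (w :: 'a::euclidean_space \<Rightarrow> real) x y"
proof -
  let ?I = "\<lambda>v. indicator (level_set \<Omega> w v) :: 'a \<Rightarrow> real"
  define c where "c = norm (x - y) powr (real DIM('a) + \<alpha>)"
  have "\<bar>level_step W \<Omega> w x - level_step W \<Omega> w y\<bar> = \<bar>\<Sum>v\<in>W. real_of_int v * (?I v x - ?I v y)\<bar>"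
    unfolding level_step_def by (simp add: sum_subtractf[symmetric] right_diff_distrib)
  also have "\<dots> \<le> (\<Sum>v\<in>W. real_of_int \<bar>v\<bar> * \<bar>?I v x - ?I v y\<bar>)"
    by (rule order.trans[OF sum_abs]) (simp add: abs_mult)
  finally have "\<bar>level_step W \<Omega> w x - level_step W \<Omega> w y\<bar> / c
      \<le> (\<Sum>v\<in>W. real_of_int \<bar>v\<bar> * (\<bar>?I v x - ?I v y\<bar> / c))"
    unfolding c_def by (simp add: divide_right_mono sum_divide_distrib[symmetric])
  then have "gagliardo_kernel (real DIM('a) + \<alpha>) (level_step W \<Omega> w) x y
      \<le> ennreal (\<Sum>v\<in>W. real_of_int \<bar>v\<bar> * (\<bar>?I v x - ?I v y\<bar> / c))"
    unfolding gagliardo_kernel_def c_def by (rule ennreal_leI)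
  also have "\<dots> = (\<Sum>v\<in>W. ennreal (real_of_int \<bar>v\<bar> * (\<bar>?I v x - ?I v y\<bar> / c)))"
    by (rule sum_ennreal[symmetric]) (simp add: c_def)
  also have "\<dots> = (\<Sum>v\<in>W. ennreal (real_of_int \<bar>v\<bar>) * gagliardo_kernel (real DIM('a) + \<alpha>) (?I v) x y)"
    unfolding gagliardo_kernel_def c_def by (intro sum.cong refl ennreal_mult) auto
  finally show ?thesis
    unfolding level_kernel_def by (rule mult_left_mono) simp
qed

lemma gagliardo_level_step_le_R_alpha:
  fixes w :: "'a::euclidean_space \<Rightarrow> real"
  assumes "finite W" and lev: "\<And>v. level_set \<Omega> w v \<in> sets lebesgue"
  shows "ennreal (1 - \<alpha>) * gagliardo (real DIM('a) + \<alpha>) (level_step W \<Omega> w) \<le> R_alpha \<alpha> W \<Omega> w"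
proof -
  have fm: "level_step W \<Omega> w \<in> borel_measurable lebesgue"
    by (rule borel_measurable_level_step[OF lev])
  have "ennreal (1 - \<alpha>) * gagliardo (real DIM('a) + \<alpha>) (level_step W \<Omega> w)
      = (\<integral>\<^sup>+x. (\<integral>\<^sup>+y. ennreal (1 - \<alpha>) * gagliardo_kernel (real DIM('a) + \<alpha>) (level_step W \<Omega> w) x y
          \<partial>lebesgue) \<partial>lebesgue)"
    unfolding gagliardo_def
    using borel_measurable_gagliardo_kernel_section[OF fm]
      sigma_finite_measure.borel_measurable_nn_integral[OF sigma_finite_lebesgue
        borel_measurable_gagliardo_kernel[OF fm]]
    by (simp add: nn_integral_cmult case_prod_beta')
  also have "\<dots> \<le> R_alpha \<alpha> W \<Omega> w"
    unfolding R_alpha_eq_nn_integral_level_kernel[OF lev]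
    by (intro nn_integral_mono gagliardo_kernel_level_step_le \<open>finite W\<close>)
  finally show ?thesis .
qed

lemma gagliardo_level_step_le:
  fixes w :: "'a::euclidean_space \<Rightarrow> real"
  assumes W: "finite W" and lev: "\<And>v. level_set \<Omega> w v \<in> sets lebesgue"
    and \<alpha>: "\<alpha> < 1" and R: "R_alpha \<alpha> W \<Omega> w \<le> ennreal C" and C: "0 \<le> C"
  shows "gagliardo (real DIM('a) + \<alpha>) (level_step W \<Omega> w) \<le> ennreal (C / (1 - \<alpha>))"
proof -
  have inv: "ennreal (1 / (1 - \<alpha>)) * ennreal (1 - \<alpha>) = 1"
    using \<alpha> by (subst ennreal_mult[symmetric]) auto
  have "gagliardo (real DIM('a) + \<alpha>) (level_step W \<Omega> w)
      = ennreal (1 / (1 - \<alpha>)) * (ennreal (1 - \<alpha>) * gagliardo (real DIM('a) + \<alpha>) (level_step W \<Omega> w))"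
    unfolding mult.assoc[symmetric] inv by simp
  also have "\<dots> \<le> ennreal (1 / (1 - \<alpha>)) * ennreal C"
    by (intro mult_left_mono order.trans[OF gagliardo_level_step_le_R_alpha[OF W lev] R]) simp
  also have "\<dots> = ennreal (C / (1 - \<alpha>))"
    using C \<alpha> by (subst ennreal_mult[symmetric]) auto
  finally show ?thesis .
qed

lemma AE_eventually_eq_subseq_of_R_alpha_bounded:
  fixes w :: "nat \<Rightarrow> 'a::euclidean_space \<Rightarrow> real"
  assumes \<Omega>: "bounded \<Omega>" "\<Omega> \<in> sets lebesgue" and W: "finite W" and \<alpha>: "0 < \<alpha>" "\<alpha> < 1"
    and wm: "\<And>n. w n \<in> borel_measurable (lebesgue_on \<Omega>)"
    and wW: "\<And>n. AE x in lebesgue_on \<Omega>. w n x \<in> real_of_int ` W"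
    and R: "\<And>n. R_alpha \<alpha> W \<Omega> (w n) \<le> ennreal C" and C: "0 \<le> C"
  obtains r wl where "strict_mono r" "wl \<in> borel_measurable (lebesgue_on \<Omega>)"
    "AE x in lebesgue_on \<Omega>. wl x \<in> real_of_int ` W \<and> (\<forall>\<^sub>F k in sequentially. w (r k) x = wl x)"
proof -
  define f where "f n = level_step W \<Omega> (w n)" for n
  have lev: "level_set \<Omega> (w n) v \<in> sets lebesgue" for n v
    using sets_lebesgue_level_set[OF \<Omega>(2) wm] .
  have fm: "f n \<in> borel_measurable lebesgue" for n
    unfolding f_def by (rule borel_measurable_level_step[OF lev])
  obtain R0 where R0: "\<And>x. x \<in> \<Omega> \<Longrightarrow> norm x \<le> R0"
    using \<Omega>(1) unfolding bounded_iff by blast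
  have "\<exists>r. strict_mono r \<and> (AE x in lebesgue. convergent (\<lambda>k. f (r k) x))"
  proof (rule AE_convergent_subseq_of_gagliardo_bounded[OF fm _ _ _ \<alpha>(1)])
    show "\<bar>f n x\<bar> \<le> (\<Sum>v\<in>W. \<bar>real_of_int v\<bar>)" for n x
      unfolding f_def by (rule abs_level_step_le[OF W])
    show "norm x \<le> R0" if "f n x \<noteq> 0" for n x
      using R0 level_step_outside that unfolding f_def by metis
    show "gagliardo (real DIM('a) + \<alpha>) (f n) \<le> ennreal (C / (1 - \<alpha>))" for n
      unfolding f_def by (rule gagliardo_level_step_le[OF W lev \<alpha>(2) R C])
  qed
  then obtain r where r: "strict_mono r" and conv: "AE x in lebesgue. convergent (\<lambda>k. f (r k) x)"
    by blast
  define wl where "wl x = lim (\<lambda>k. f (r k) x)" for x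
  have "wl \<in> borel_measurable lebesgue"
    unfolding wl_def by (rule borel_measurable_lim_metric) (rule fm)
  then have wl: "wl \<in> borel_measurable (lebesgue_on \<Omega>)"
    by (rule measurable_restrict_space1)
  have "AE x in lebesgue_on \<Omega>. x \<in> \<Omega>"
    by (rule AE_I2) simp
  moreover have "AE x in lebesgue_on \<Omega>. convergent (\<lambda>k. f (r k) x)"
    using conv \<Omega>(2) by (subst AE_restrict_space_iff) (auto elim: AE_mp)
  moreover have "AE x in lebesgue_on \<Omega>. \<forall>n. w n x \<in> real_of_int ` W"
    using wW by (simp add: AE_all_countable)
  ultimately have "AE x in lebesgue_on \<Omega>. wl x \<in> real_of_int ` W \<and> (\<forall>\<^sub>F k in sequentially. w (r k) x = wl x)"
  proof eventually_elim
    case (elim x)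
    then have "f n x = w n x" for n
      unfolding f_def by (intro level_step_eq[OF W]) auto
    with elim show ?case
      using tendsto_of_int_image_eventually_eq[of "\<lambda>k. w (r k) x" W "wl x"]
      unfolding wl_def by (simp add: convergent_LIMSEQ_iff)
  qed
  then show ?thesis
    by (rule that[OF r wl])
qed

section \<open>The trust-region subproblem\<close>

lemma abs_diff_le_of_mem:
  assumes "finite W" "s \<in> real_of_int ` W" "t \<in> real_of_int ` W"
  shows "\<bar>s - t\<bar> \<le> 2 * (\<Sum>v\<in>W. \<bar>real_of_int v\<bar>)"
  using abs_le_sum_abs_of_mem[OF assms(1,2)] abs_le_sum_abs_of_mem[OF assms(1,3)] by linarith

lemma AE_abs_mult_diff_le:
  fixes g :: "'a \<Rightarrow> real"
  assumes "finite W" "AE x in M. v x \<in> real_of_int ` W" "AE x in M. u x \<in> real_of_int ` W"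
  shows "AE x in M. \<bar>g x * (v x - u x)\<bar> \<le> 2 * (\<Sum>v\<in>W. \<bar>real_of_int v\<bar>) * \<bar>g x\<bar>"
  using assms(2,3)
proof eventually_elim
  case (elim x)
  have "\<bar>g x\<bar> * \<bar>v x - u x\<bar> \<le> \<bar>g x\<bar> * (2 * (\<Sum>v\<in>W. \<bar>real_of_int v\<bar>))"
    by (rule mult_left_mono[OF abs_diff_le_of_mem[OF assms(1) elim]]) simp
  then show ?case
    by (simp add: abs_mult mult_ac)
qed

lemma abs_integral_mult_diff_le:
  fixes g :: "'a \<Rightarrow> real"
  assumes W: "finite W" and g: "integrable M g"
    and v: "v \<in> borel_measurable M" "AE x in M. v x \<in> real_of_int ` W"
    and u: "u \<in> borel_measurable M" "AE x in M. u x \<in> real_of_int ` W"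
  shows "\<bar>\<integral>x. g x * (v x - u x) \<partial>M\<bar> \<le> 2 * (\<Sum>v\<in>W. \<bar>real_of_int v\<bar>) * (\<integral>x. \<bar>g x\<bar> \<partial>M)"
proof -
  have bound: "AE x in M. \<bar>g x * (v x - u x)\<bar> \<le> 2 * (\<Sum>v\<in>W. \<bar>real_of_int v\<bar>) * \<bar>g x\<bar>"
    by (rule AE_abs_mult_diff_le[OF W v(2) u(2)])
  have gm: "g \<in> borel_measurable M"
    using g by simp
  have int: "integrable M (\<lambda>x. g x * (v x - u x))"
    by (rule Bochner_Integration.integrable_bound[where f="\<lambda>x. 2 * (\<Sum>v\<in>W. \<bar>real_of_int v\<bar>) * \<bar>g x\<bar>"])
       (use g gm v u bound in auto)
  have "\<bar>\<integral>x. g x * (v x - u x) \<partial>M\<bar> \<le> (\<integral>x. \<bar>g x * (v x - u x)\<bar> \<partial>M)"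
    by (rule integral_abs_bound)
  also have "\<dots> \<le> (\<integral>x. 2 * (\<Sum>v\<in>W. \<bar>real_of_int v\<bar>) * \<bar>g x\<bar> \<partial>M)"
    using int g bound by (intro integral_mono_AE) auto
  also have "\<dots> = 2 * (\<Sum>v\<in>W. \<bar>real_of_int v\<bar>) * (\<integral>x. \<bar>g x\<bar> \<partial>M)"
    by simp
  finally show ?thesis .
qed

lemma enn2ereal_eq_ereal_enn2real: "x < \<infinity> \<Longrightarrow> enn2ereal x = ereal (enn2real x)"
  by (cases x rule: ennreal_cases) (auto simp: enn2ereal_ennreal)

lemma trust_obj_eq_ereal:
  assumes "R_alpha \<alpha> W \<Omega> v < \<infinity>" "R_alpha \<alpha> W \<Omega> wbar < \<infinity>"
  shows "trust_obj \<eta> \<alpha> W \<Omega> g wbar v = ereal ((\<integral>x. g x * (v x - wbar x) \<partial>lebesgue_on \<Omega>)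
    + \<eta> * enn2real (R_alpha \<alpha> W \<Omega> v) - \<eta> * enn2real (R_alpha \<alpha> W \<Omega> wbar))"
  unfolding trust_obj_def
  by (simp add: enn2ereal_eq_ereal_enn2real[OF assms(1)] enn2ereal_eq_ereal_enn2real[OF assms(2)])

lemma trust_obj_eq_top:
  assumes "0 < \<eta>" "R_alpha \<alpha> W \<Omega> wbar < \<infinity>" "R_alpha \<alpha> W \<Omega> v = \<infinity>"
  shows "trust_obj \<eta> \<alpha> W \<Omega> g wbar v = \<infinity>"
  using assms unfolding trust_obj_def by (simp add: enn2ereal_eq_ereal_enn2real)

lemma R_alpha_le_of_trust_obj_le:
  assumes \<eta>: "0 < \<eta>" and Rb: "R_alpha \<alpha> W \<Omega> wbar < \<infinity>"
    and obj: "trust_obj \<eta> \<alpha> W \<Omega> g wbar v \<le> ereal c"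
    and lin: "\<bar>\<integral>x. g x * (v x - wbar x) \<partial>lebesgue_on \<Omega>\<bar> \<le> \<Lambda>"
  shows "R_alpha \<alpha> W \<Omega> v \<le> ennreal ((c + \<Lambda>) / \<eta> + enn2real (R_alpha \<alpha> W \<Omega> wbar))"
proof -
  have fin: "R_alpha \<alpha> W \<Omega> v < \<infinity>"
  proof (rule ccontr)
    assume "\<not> R_alpha \<alpha> W \<Omega> v < \<infinity>"
    then have "trust_obj \<eta> \<alpha> W \<Omega> g wbar v = \<infinity>"
      by (intro trust_obj_eq_top[OF \<eta> Rb]) (simp add: not_less top_unique)
    with obj show False
      by simp
  qed
  then have "(\<integral>x. g x * (v x - wbar x) \<partial>lebesgue_on \<Omega>) + \<eta> * enn2real (R_alpha \<alpha> W \<Omega> v)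
      - \<eta> * enn2real (R_alpha \<alpha> W \<Omega> wbar) \<le> c"
    using obj by (simp add: trust_obj_eq_ereal[OF fin Rb])
  then have bound: "\<eta> * enn2real (R_alpha \<alpha> W \<Omega> v) \<le> c + \<Lambda> + \<eta> * enn2real (R_alpha \<alpha> W \<Omega> wbar)"
    using lin by (simp only: abs_le_iff) linarith
  have "R_alpha \<alpha> W \<Omega> v = ennreal (\<eta> * enn2real (R_alpha \<alpha> W \<Omega> v) / \<eta>)"
    using fin \<eta> by simp
  also have "\<dots> \<le> ennreal ((c + \<Lambda> + \<eta> * enn2real (R_alpha \<alpha> W \<Omega> wbar)) / \<eta>)"
    using bound \<eta> by (intro ennreal_leI divide_right_mono) auto
  also have "\<dots> = ennreal ((c + \<Lambda>) / \<eta> + enn2real (R_alpha \<alpha> W \<Omega> wbar))"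
    using \<eta> by (simp add: add_divide_distrib)
  finally show ?thesis .
qed

lemma trust_feasible_limit:
  assumes \<Omega>: "\<Omega> \<in> lmeasurable" and W: "finite W"
    and feas: "\<And>k. trust_feasible W \<Omega> \<Delta> wbar (w k)"
    and wbar: "wbar \<in> borel_measurable (lebesgue_on \<Omega>)" "AE x in lebesgue_on \<Omega>. wbar x \<in> real_of_int ` W"
    and wl: "wl \<in> borel_measurable (lebesgue_on \<Omega>)"
      "AE x in lebesgue_on \<Omega>. wl x \<in> real_of_int ` W \<and> (\<forall>\<^sub>F k in sequentially. w k x = wl x)"
  shows "trust_feasible W \<Omega> \<Delta> wbar wl"
proof -
  let ?L = "lebesgue_on \<Omega>" and ?B = "2 * (\<Sum>v\<in>W. \<bar>real_of_int v\<bar>)"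
  have fin: "finite_measure ?L"
    by (rule finite_measure_lebesgue_on[OF \<Omega>])
  have w: "w k \<in> borel_measurable ?L" "AE x in ?L. w k x \<in> real_of_int ` W"
    "(\<integral>x. \<bar>w k x - wbar x\<bar> \<partial>?L) \<le> \<Delta>" for k
    using feas[of k] unfolding trust_feasible_def by auto
  have wlW: "AE x in ?L. wl x \<in> real_of_int ` W"
    using wl(2) by (rule eventually_mono) blast
  have "AE x in ?L. norm (wl x) \<le> (\<Sum>v\<in>W. \<bar>real_of_int v\<bar>)"
    using wlW by (rule eventually_mono) (simp add: abs_le_sum_abs_of_mem[OF W])
  then have "integrable ?L wl"
    by (rule finite_measure.integrable_const_bound[OF fin _ wl(1)])
  moreover have "(\<lambda>k. \<integral>x. \<bar>w k x - wbar x\<bar> \<partial>?L) \<longlonglongrightarrow> (\<integral>x. \<bar>wl x - wbar x\<bar> \<partial>?L)"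
  proof (rule integral_tendsto_of_eventually_eq[where h="\<lambda>_. ?B"])
    show "integrable ?L (\<lambda>_. ?B)"
      by (rule finite_measure.integrable_const[OF fin])
    show "AE x in ?L. \<bar>\<bar>w k x - wbar x\<bar>\<bar> \<le> ?B" for k
      using w(2)[of k] wbar(2) by eventually_elim (simp add: abs_diff_le_of_mem[OF W])
    show "AE x in ?L. \<forall>\<^sub>F k in sequentially. \<bar>w k x - wbar x\<bar> = \<bar>wl x - wbar x\<bar>"
      using wl(2) by (rule eventually_mono) (auto elim: eventually_mono)
  qed (use w(1) wl(1) wbar(1) in measurable)
  then have "(\<integral>x. \<bar>wl x - wbar x\<bar> \<partial>?L) \<le> \<Delta>"
    by (rule LIMSEQ_le_const2) (use w(3) in auto)
  ultimately show ?thesis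
    unfolding trust_feasible_def using wlW by blast
qed

lemma trust_obj_le_liminf:
  assumes \<Omega>: "\<Omega> \<in> sets lebesgue" and W: "finite W" and \<eta>: "0 < \<eta>"
    and Rb: "R_alpha \<alpha> W \<Omega> wbar < \<infinity>" and g: "integrable (lebesgue_on \<Omega>) g"
    and wbar: "wbar \<in> borel_measurable (lebesgue_on \<Omega>)" "AE x in lebesgue_on \<Omega>. wbar x \<in> real_of_int ` W"
    and w: "\<And>k. w k \<in> borel_measurable (lebesgue_on \<Omega>)"
      "\<And>k. AE x in lebesgue_on \<Omega>. w k x \<in> real_of_int ` W"
    and wl: "wl \<in> borel_measurable (lebesgue_on \<Omega>)"
      "AE x in lebesgue_on \<Omega>. wl x \<in> real_of_int ` W \<and> (\<forall>\<^sub>F k in sequentially. w k x = wl x)"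
  shows "trust_obj \<eta> \<alpha> W \<Omega> g wbar wl \<le> liminf (\<lambda>k. trust_obj \<eta> \<alpha> W \<Omega> g wbar (w k))"
proof -
  let ?L = "lebesgue_on \<Omega>"
  define lin where "lin v = (\<integral>x. g x * (v x - wbar x) \<partial>?L)" for v
  define reg where "reg v = ereal \<eta> * enn2ereal (R_alpha \<alpha> W \<Omega> v)" for v
  define c where "c = ereal \<eta> * enn2ereal (R_alpha \<alpha> W \<Omega> wbar)"
  have obj: "trust_obj \<eta> \<alpha> W \<Omega> g wbar v = ereal (lin v) + reg v + - c" for v
    unfolding trust_obj_def lin_def reg_def c_def minus_ereal_def ..
  have c: "\<bar>c\<bar> \<noteq> \<infinity>"
    unfolding c_def using Rb by (simp add: enn2ereal_eq_ereal_enn2real)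
  have wlW: "AE x in ?L. wl x \<in> real_of_int ` W"
    using wl(2) by (rule eventually_mono) blast
  have "(\<lambda>k. lin (w k)) \<longlonglongrightarrow> lin wl"
    unfolding lin_def
  proof (rule integral_tendsto_of_eventually_eq[where h="\<lambda>x. 2 * (\<Sum>v\<in>W. \<bar>real_of_int v\<bar>) * \<bar>g x\<bar>"])
    show "integrable ?L (\<lambda>x. 2 * (\<Sum>v\<in>W. \<bar>real_of_int v\<bar>) * \<bar>g x\<bar>)"
      using g by simp
    show "AE x in ?L. \<bar>g x * (w k x - wbar x)\<bar> \<le> 2 * (\<Sum>v\<in>W. \<bar>real_of_int v\<bar>) * \<bar>g x\<bar>" for k
      by (rule AE_abs_mult_diff_le[OF W w(2) wbar(2)])
    show "AE x in ?L. \<forall>\<^sub>F k in sequentially. g x * (w k x - wbar x) = g x * (wl x - wbar x)"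
      using wl(2) by (rule eventually_mono) (auto elim: eventually_mono)
  qed (use g w(1) wl(1) wbar(1) in measurable)
  then have lin_lim: "(\<lambda>k. ereal (lin (w k))) \<longlonglongrightarrow> ereal (lin wl)"
    by simp
  have "R_alpha \<alpha> W \<Omega> wl \<le> liminf (\<lambda>k. R_alpha \<alpha> W \<Omega> (w k))"
    by (rule R_alpha_le_liminf[OF \<Omega> w(1) wl(1)]) (use wl(2) in \<open>auto elim: eventually_mono\<close>)
  then have "reg wl \<le> ereal \<eta> * enn2ereal (liminf (\<lambda>k. R_alpha \<alpha> W \<Omega> (w k)))"
    unfolding reg_def using \<eta> by (intro ereal_mult_left_mono) (auto simp: less_eq_ennreal.rep_eq)
  also have "\<dots> = liminf (\<lambda>k. reg (w k))"
    unfolding reg_def using \<eta>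
    by (simp add: Liminf_ereal_mult_left Liminf_compose_continuous_mono[OF continuous_on_enn2ereal]
        mono_def less_eq_ennreal.rep_eq)
  finally have "trust_obj \<eta> \<alpha> W \<Omega> g wbar wl \<le> ereal (lin wl) + liminf (\<lambda>k. reg (w k)) + - c"
    unfolding obj by (intro add_mono order.refl)
  also have "\<dots> = liminf (\<lambda>k. ereal (lin (w k)) + reg (w k)) + - c"
    by (subst ereal_liminf_lim_add[OF lin_lim]) simp_all
  also have "\<dots> = liminf (\<lambda>k. trust_obj \<eta> \<alpha> W \<Omega> g wbar (w k))"
    unfolding obj using c by (simp add: Liminf_add_ereal_right)
  finally show ?thesis .
qed

lemma trust_region_compact_lsc:
  fixes w :: "nat \<Rightarrow> 'a::euclidean_space \<Rightarrow> real"
  assumes \<Omega>: "bounded \<Omega>" "\<Omega> \<in> sets lebesgue" and W: "finite W" and \<eta>: "0 < \<eta>" and \<alpha>: "0 < \<alpha>" "\<alpha> < 1"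
    and Rb: "R_alpha \<alpha> W \<Omega> wbar < \<infinity>" and g: "integrable (lebesgue_on \<Omega>) g"
    and wbar: "wbar \<in> borel_measurable (lebesgue_on \<Omega>)" "AE x in lebesgue_on \<Omega>. wbar x \<in> real_of_int ` W"
    and feas: "\<And>n. trust_feasible W \<Omega> \<Delta> wbar (w n)"
    and obj: "\<And>n. trust_obj \<eta> \<alpha> W \<Omega> g wbar (w n) \<le> ereal c"
  shows "\<exists>r wl. strict_mono r \<and> trust_feasible W \<Omega> \<Delta> wbar wl \<and>
    trust_obj \<eta> \<alpha> W \<Omega> g wbar wl \<le> liminf (\<lambda>n. trust_obj \<eta> \<alpha> W \<Omega> g wbar (w (r n)))"
proof -
  have w: "w n \<in> borel_measurable (lebesgue_on \<Omega>)" "AE x in lebesgue_on \<Omega>. w n x \<in> real_of_int ` W" for n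
    using feas[of n] unfolding trust_feasible_def by auto
  define \<Lambda> where "\<Lambda> = 2 * (\<Sum>v\<in>W. \<bar>real_of_int v\<bar>) * (\<integral>x. \<bar>g x\<bar> \<partial>lebesgue_on \<Omega>)"
  have R_bound: "R_alpha \<alpha> W \<Omega> (w n) \<le> ennreal (max 0 ((c + \<Lambda>) / \<eta> + enn2real (R_alpha \<alpha> W \<Omega> wbar)))" for n
    using R_alpha_le_of_trust_obj_le[OF \<eta> Rb obj abs_integral_mult_diff_le[OF W g w wbar, folded \<Lambda>_def]]
    by (rule order.trans) (simp add: ennreal_leI)
  obtain r wl where r: "strict_mono r" and wl: "wl \<in> borel_measurable (lebesgue_on \<Omega>)"
    "AE x in lebesgue_on \<Omega>. wl x \<in> real_of_int ` W \<and> (\<forall>\<^sub>F k in sequentially. w (r k) x = wl x)"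
    by (rule AE_eventually_eq_subseq_of_R_alpha_bounded[OF \<Omega> W \<alpha> w(1) w(2) R_bound]) simp
  have "\<Omega> \<in> lmeasurable"
    using \<Omega> by (rule bounded_set_imp_lmeasurable)
  then have "trust_feasible W \<Omega> \<Delta> wbar wl"
    by (rule trust_feasible_limit[OF _ W feas wbar wl])
  moreover have "trust_obj \<eta> \<alpha> W \<Omega> g wbar wl \<le> liminf (\<lambda>k. trust_obj \<eta> \<alpha> W \<Omega> g wbar (w (r k)))"
    by (rule trust_obj_le_liminf[OF \<Omega>(2) W \<eta> Rb g wbar w wl])
  ultimately show ?thesis
    using r by blast
qed

theorem proposition5p3:
  fixes \<Omega> :: "'a::euclidean_space set" and W :: "int set" and \<eta> \<alpha> \<Delta> :: real
    and g wbar :: "'a \<Rightarrow> real"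
  assumes "polyhedral_domain \<Omega>"
    and "\<eta> > 0"
    and "finite W" and "W \<noteq> {}"
    and "0 < \<alpha>" and "\<alpha> < 1"
    and "in_F W \<Omega> wbar"
    and "R_alpha \<alpha> W \<Omega> wbar < \<infinity>"
    and "g \<in> borel_measurable (lebesgue_on \<Omega>)"
    and "integrable (lebesgue_on \<Omega>) (\<lambda>x. (g x)\<^sup>2)"
    and "\<Delta> \<ge> 0"
  shows "\<exists>w. trust_feasible W \<Omega> \<Delta> wbar w \<and>
           (\<forall>v. trust_feasible W \<Omega> \<Delta> wbar v \<longrightarrow>
                trust_obj \<eta> \<alpha> W \<Omega> g wbar w \<le> trust_obj \<eta> \<alpha> W \<Omega> g wbar v)"
proof (rule ereal_direct_method)
  have "open \<Omega>" and bounded: "bounded \<Omega>"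
    using assms(1) unfolding polyhedral_domain_def by auto
  then have \<Omega>: "\<Omega> \<in> sets lebesgue" "\<Omega> \<in> lmeasurable"
    by (auto intro: bounded_set_imp_lmeasurable)
  have g: "integrable (lebesgue_on \<Omega>) g"
    using finite_measure.square_integrable_imp_integrable[OF finite_measure_lebesgue_on[OF \<Omega>(2)]]
      assms(9,10) .
  have wbar: "wbar \<in> borel_measurable (lebesgue_on \<Omega>)" "AE x in lebesgue_on \<Omega>. wbar x \<in> real_of_int ` W"
    using assms(7) unfolding in_F_def by auto
  show "trust_feasible W \<Omega> \<Delta> wbar wbar"
    using assms(7,11) unfolding in_F_def trust_feasible_def by simp
  show "\<exists>r wl. strict_mono r \<and> trust_feasible W \<Omega> \<Delta> wbar wl \<and>
      trust_obj \<eta> \<alpha> W \<Omega> g wbar wl \<le> liminf (\<lambda>n. trust_obj \<eta> \<alpha> W \<Omega> g wbar (w (r n)))"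
    if "\<And>n. trust_feasible W \<Omega> \<Delta> wbar (w n)" "\<And>n. trust_obj \<eta> \<alpha> W \<Omega> g wbar (w n) \<le> ereal c"
    for w :: "nat \<Rightarrow> 'a \<Rightarrow> real" and c
    by (rule trust_region_compact_lsc[OF bounded \<Omega>(1) assms(3,2,5,6,8) g wbar that])
qed

end
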